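(* For $n\ge2$ let $\mathcal{W}_n$ be the arc diagram with $\mathbf{Z}=\{Z_1,\dots,Z_n\}$, $\mathbf{a}=\{a_1,\dots,a_{2n-2}\}$, where $a_1,\dots,a_{n-1}$ lie on $Z_1$ in this order and $a_{n+i-1}\in Z_{i+1}$ for $i=1,\dots,n-1$, and matching $M(a_i)=M(a_{2n-i-1})=i$ for $i=1,\dots,n-1$. Then for every $k=0,\dots,n-1$ there is an isomorphism of differential algebras $\mathcal{A}(\mathcal{W}_n,k)\cong\mathcal{A}(n-1,k)$.
   Context: Strands algebra $\mathcal{A}(n,k)$: the $\mathbb{F}_2$-vector space with basis triples $(S,T,\phi)$, $S,T\subset\{1,\dots,n\}$ of size $k$, $\phi\colon S\to T$ a bijection with $\phi(i)\ge i$; product $(S,T,\phi)(U,V,\psi)=(S,V,\psi\circ\phi)$ if $T=U$ and $\mathrm{inv}(\phi)+\mathrm{inv}(\psi)=\mathrm{inv}(\psi\circ\phi)$, else $0$, where $\mathrm{inv}$ counts pairs $i<j$ with $\phi(i)>\phi(j)$; differential: sum over inversions of the generators obtained by swapping the two images, keeping those with inversion number exactly one less. $\mathcal{A}(n)=\bigoplus_k\mathcal{A}(n,k)$. For an arc diagram $\mathcal{Z}=(\mathbf{Z},\mathbf{a},M)$ with $\mathbf{Z}=\{Z_1,\dots,Z_l\}$ (oriented segments), $\mathbf{a}=\{a_1,\dots,a_{2k}\}$ ordered along $\mathbf{Z}$, $|Z_j|=\#(Z_j\cap\mathbf{a})$, the extended strands algebra $\mathcal{A}(|Z_1|,\dots,|Z_l|)=\bigoplus\mathcal{A}(|Z_1|,k_1)\otimes\cdots\otimes\mathcal{A}(|Z_l|,k_l)$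 is viewed inside $\mathcal{A}(2k)$, strands staying within segments. For $s\subset\{1,\dots,k\}$ with $|s|=i$, a section is $S\subset M^{-1}(s)$ mapped bijectively onto $s$ by $M$; $I(s)=\sum_{S}(S,S,\mathrm{id})$ over sections; $I=\sum_{|s|=i}I(s)$. For $S,T\subset\{1,\dots,2k\}$ and a bijection $\psi\colon S\to T$ with $\psi(x)>x$, $a_i(S,T,\psi)=\sum_U(S\cup U,T\cup U,\psi\cup\mathrm{id}_U)$ over $U$ disjoint from $S\cup T$ with $|S\cup U|=i$. $\mathcal{A}(\mathcal{Z},i)$ is the subalgebra generated by the $I(s)$, $|s|=i$, and all $I\,a_i(S,T,\psi)\,I$; it is closed under the differential. *)

theory Defs
  imports Main
begin

text \<open>Generators (S,T,phi) of the strands algebra are encoded as the finite graph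
  of phi, a set of strands (x, phi x); S = Domain, T = Range.
  Elements of the F2-vector space are finite sets of generators (formal sums
  with F2 coefficients); addition is symmetric difference.\<close>

type_synonym gen = "(nat \<times> nat) set"
type_synonym elt = "gen set"

definition is_gen :: "nat \<Rightarrow> gen \<Rightarrow> bool" where
  "is_gen n g \<longleftrightarrow> g \<subseteq> {1..n} \<times> {1..n} \<and> (\<forall>(a,b)\<in>g. a \<le> b) \<and>
     (\<forall>(a,b)\<in>g. \<forall>(c,d)\<in>g. (a = c \<longleftrightarrow> b = d))"

definition invs :: "gen \<Rightarrow> ((nat \<times> nat) \<times> (nat \<times> nat)) set" where
  "invs g = {((i,a),(j,b)). (i,a) \<in> g \<and> (j,b) \<in> g \<and> i < j \<and> b < a}"

definition ninv :: "gen \<Rightarrow> nat" where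
  "ninv g = card (invs g)"

text \<open>Product of generators: composition psi o phi of (S,T,phi)(U,V,psi).\<close>
definition gmult :: "gen \<Rightarrow> gen \<Rightarrow> gen option" where
  "gmult x y = (if Range x = Domain y \<and> ninv x + ninv y = ninv (x O y)
                then Some (x O y) else None)"

definition swap_strands :: "gen \<Rightarrow> nat \<times> nat \<Rightarrow> nat \<times> nat \<Rightarrow> gen" where
  "swap_strands g p q = (g - {p, q}) \<union> {(fst p, snd q), (fst q, snd p)}"

definition eadd :: "elt \<Rightarrow> elt \<Rightarrow> elt" where
  "eadd X Y = (X - Y) \<union> (Y - X)"

definition emult :: "elt \<Rightarrow> elt \<Rightarrow> elt" where
  "emult X Y = {c. odd (card {(x,y). x \<in> X \<and> y \<in> Y \<and> gmult x y = Some c})}"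

definition ediff :: "elt \<Rightarrow> elt" where
  "ediff X = {c. odd (card {(x,p,q). x \<in> X \<and> (p,q) \<in> invs x \<and>
                  c = swap_strands x p q \<and> ninv c + 1 = ninv x})}"

definition strands_alg :: "nat \<Rightarrow> nat \<Rightarrow> elt set" where
  "strands_alg n k = {X. finite X \<and> (\<forall>g\<in>X. is_gen n g \<and> card g = k)}"

inductive_set gen_subalg :: "elt set \<Rightarrow> elt set" for G where
  base: "x \<in> G \<Longrightarrow> x \<in> gen_subalg G"
| zero: "{} \<in> gen_subalg G"
| add: "x \<in> gen_subalg G \<Longrightarrow> y \<in> gen_subalg G \<Longrightarrow> eadd x y \<in> gen_subalg G"
| mult: "x \<in> gen_subalg G \<Longrightarrow> y \<in> gen_subalg G \<Longrightarrow> emult x y \<in> gen_subalg G"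

text \<open>Arc diagram with points 1..N (N = 2K) ordered along the segments;
  seg a is the index of the segment containing point a, M the matching onto 1..K.\<close>
definition ext_gen :: "nat \<Rightarrow> (nat \<Rightarrow> nat) \<Rightarrow> gen \<Rightarrow> bool" where
  "ext_gen N seg g \<longleftrightarrow> is_gen N g \<and> (\<forall>(a,b)\<in>g. seg a = seg b)"

definition idg :: "nat set \<Rightarrow> gen" where
  "idg S = {(x,x) | x. x \<in> S}"

definition I_s :: "nat \<Rightarrow> (nat \<Rightarrow> nat) \<Rightarrow> nat set \<Rightarrow> elt" where
  "I_s N M s = {idg S | S. S \<subseteq> {1..N} \<and> inj_on M S \<and> M ` S = s}"

definition I_tot :: "nat \<Rightarrow> nat \<Rightarrow> (nat \<Rightarrow> nat) \<Rightarrow> nat \<Rightarrow> elt" where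
  "I_tot N K M i = (\<Union>s \<in> {s. s \<subseteq> {1..K} \<and> card s = i}. I_s N M s)"

definition a_elt :: "nat \<Rightarrow> nat \<Rightarrow> gen \<Rightarrow> elt" where
  "a_elt N i psi = {psi \<union> idg U | U. U \<subseteq> {1..N} \<and> U \<inter> (Domain psi \<union> Range psi) = {}
                     \<and> card (Domain psi \<union> U) = i}"

definition arc_alg :: "nat \<Rightarrow> nat \<Rightarrow> (nat \<Rightarrow> nat) \<Rightarrow> (nat \<Rightarrow> nat) \<Rightarrow> nat \<Rightarrow> elt set" where
  "arc_alg N K seg M i = gen_subalg
     ({I_s N M s | s. s \<subseteq> {1..K} \<and> card s = i} \<union>
      {emult (emult (I_tot N K M i) (a_elt N i psi)) (I_tot N K M i) | psi.
          ext_gen N seg psi \<and> (\<forall>(a,b)\<in>psi. a < b)})"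

definition dga_iso :: "elt set \<Rightarrow> elt set \<Rightarrow> bool" where
  "dga_iso A B \<longleftrightarrow> (\<exists>f. bij_betw f A B \<and>
     (\<forall>x\<in>A. \<forall>y\<in>A. f (eadd x y) = eadd (f x) (f y) \<and> f (emult x y) = emult (f x) (f y))
     \<and> (\<forall>x\<in>A. f (ediff x) = ediff (f x)))"

text \<open>The arc diagram W_n: points 1..2n-2; points 1..n-1 on Z_1, point n+i-1 on Z_(i+1);
  M(a_i) = M(a_(2n-i-1)) = i.\<close>
definition W_seg :: "nat \<Rightarrow> nat \<Rightarrow> nat" where
  "W_seg n a = (if a \<le> n - 1 then 1 else a + 2 - n)"

definition W_M :: "nat \<Rightarrow> nat \<Rightarrow> nat" where
  "W_M n a = (if a \<le> n - 1 then a else 2 * n - 1 - a)"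

end

theory Submission
  imports Defs
begin

(* In W_n the points 1..n-1 lie on Z_1 and are fixed by the matching, while each point u of
   n..2n-2 is alone on its segment and matched with M u = 2n-1-u.  Hence a generator of the
   extended strands algebra of W_n whose domain and range are sections consists of strands
   inside Z_1 plus horizontal strands at some set U of upper points; applying M to both ends
   (proj) gives a generator g of A(n-1) in which every M u, u in U, carries a horizontal strand.
   Conversely such a pair (g,U) determines the generator lift g U, obtained by moving those
   horizontal strands from M u to u.  The map lift_elt, sending a generator of A(n-1) to the
   sum of all its lifts, is the isomorphism.

   Finally the generators
   I(s) and I a_k(psi) I of A(W_n,k) are identified as lifts, so that A(W_n,k) is exactly the
   image of A(n-1,k), and the theorem follows from the abstract fact that an injective
   homomorphism is an isomorphism onto its image. *)

section \<open>Strand generators\<close>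

definition partial_bij :: "gen \<Rightarrow> bool" where
  "partial_bij g \<longleftrightarrow> (\<forall>(a,b)\<in>g. \<forall>(c,d)\<in>g. (a = c \<longleftrightarrow> b = d))"

definition upward :: "gen \<Rightarrow> bool" where
  "upward g \<longleftrightarrow> (\<forall>(a,b)\<in>g. a \<le> b)"

lemma partial_bijD1: "partial_bij g \<Longrightarrow> (a,b) \<in> g \<Longrightarrow> (a,c) \<in> g \<Longrightarrow> b = c"
  unfolding partial_bij_def by fastforce

lemma partial_bijD2: "partial_bij g \<Longrightarrow> (a,b) \<in> g \<Longrightarrow> (c,b) \<in> g \<Longrightarrow> a = c"
  unfolding partial_bij_def by fastforce

lemma upwardD: "upward g \<Longrightarrow> (a,b) \<in> g \<Longrightarrow> a \<le> b"
  unfolding upward_def by fastforce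

lemma is_gen_iff: "is_gen n g \<longleftrightarrow> g \<subseteq> {1..n} \<times> {1..n} \<and> upward g \<and> partial_bij g"
  unfolding is_gen_def upward_def partial_bij_def by blast

lemma is_gen_finite: "is_gen n g \<Longrightarrow> finite g"
  unfolding is_gen_def using finite_subset by blast

lemma is_gen_subset: "is_gen n g \<Longrightarrow> h \<subseteq> g \<Longrightarrow> is_gen n h"
  unfolding is_gen_def by blast

lemma finite_gens: "finite {g. is_gen n g}"
  by (rule finite_subset[of _ "Pow ({1..n} \<times> {1..n})"]) (auto simp: is_gen_def)

lemma card_Domain_Range:
  assumes "finite g" "partial_bij g"
  shows "card (Domain g) = card g" "card (Range g) = card g"
proof -
  have "inj_on fst g" "inj_on snd g"
    using assms(2) unfolding inj_on_def partial_bij_def by fastforce+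
  moreover have "Domain g = fst ` g" "Range g = snd ` g" by force+
  ultimately show "card (Domain g) = card g" "card (Range g) = card g"
    by (simp_all add: card_image)
qed

lemma partial_bij_iff_inj: "partial_bij g \<longleftrightarrow> inj_on fst g \<and> inj_on snd g"
  unfolding partial_bij_def inj_on_def by fastforce

lemma is_gen_mono: "is_gen m g \<Longrightarrow> m \<le> m' \<Longrightarrow> is_gen m' g"
  unfolding is_gen_def by fastforce

lemma Domain_Range_idg:
  "Domain (idg S) = S" "Range (idg S) = S"
  "Domain (g \<union> idg S) = Domain g \<union> S" "Range (g \<union> idg S) = Range g \<union> S"
  unfolding idg_def by auto

lemma idg_inj: "idg S = idg T \<Longrightarrow> S = T"
  by (metis Domain_Range_idg(1))

lemma invs_idg: "invs (idg S) = {}"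
  unfolding invs_def idg_def by auto

lemma card_idg: "card (idg S) = card S"
proof -
  have "idg S = (\<lambda>x. (x,x)) ` S" unfolding idg_def by auto
  then show ?thesis by (simp add: card_image inj_on_def)
qed

lemma partial_bij_add_horizontal:
  assumes "partial_bij g" and "U \<inter> (Domain g \<union> Range g) = {}"
  shows "partial_bij (g \<union> idg U)"
  using assms unfolding partial_bij_def idg_def by blast

lemma relcomp_add_horizontal:
  assumes "Range g \<inter> U = {}" "Domain h \<inter> U = {}"
  shows "(g \<union> idg U) O (h \<union> idg U) = g O h \<union> idg U"
  using assms unfolding idg_def by blast

lemma Un_disjoint_cancel: "A \<inter> D = {} \<Longrightarrow> B \<inter> D = {} \<Longrightarrow> A \<union> D = B \<union> D \<longleftrightarrow> A = B"
  by blast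

lemma Un_separated_eq_iff:
  assumes "A \<subseteq> L" "B \<subseteq> L" "C \<inter> L = {}" "E \<inter> L = {}"
  shows "A \<union> C = B \<union> E \<longleftrightarrow> A = B \<and> C = E"
proof
  assume eq: "A \<union> C = B \<union> E"
  have "A = (A \<union> C) \<inter> L" "B = (B \<union> E) \<inter> L" "C = (A \<union> C) - L" "E = (B \<union> E) - L"
    using assms by blast+
  then show "A = B \<and> C = E" using eq by metis
qed simp

(* crossings D s counts the points of D strictly between the ends of the strand s, i.e. the
   horizontal strands at D that s crosses. *)
definition crossings :: "nat set \<Rightarrow> nat \<times> nat \<Rightarrow> nat" where
  "crossings D s = card {d\<in>D. fst s < d \<and> d < snd s}"

definition total_crossings :: "gen \<Rightarrow> nat set \<Rightarrow> nat" where
  "total_crossings g D = (\<Sum>s\<in>g. crossings D s)"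

lemma crossings_split:
  assumes "p \<le> q" "q \<le> r" "q \<notin> D"
  shows "crossings D (p,r) = crossings D (p,q) + crossings D (q,r)"
proof -
  have "{d\<in>D. p < d \<and> d < r} = {d\<in>D. p < d \<and> d < q} \<union> {d\<in>D. q < d \<and> d < r}"
    using assms by (auto; metis linorder_neqE_nat)
  moreover have "finite {d\<in>D. p < d \<and> d < q}" "finite {d\<in>D. q < d \<and> d < r}"
    by (auto intro: finite_subset[of _ "{..<q}"] finite_subset[of _ "{..<r}"])
  ultimately show ?thesis unfolding crossings_def
    by (simp add: card_Un_disjoint disjoint_iff)
qed

lemma ninv_add_horizontal:
  assumes fin: "finite g" and up: "upward g"
    and disj: "D \<inter> (Domain g \<union> Range g) = {}"
  shows "ninv (g \<union> idg D) = ninv g + total_crossings g D"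
proof -
  define S where "S = (SIGMA s:g. {d\<in>D. fst s < d \<and> d < snd s})"
  define f where "f = (\<lambda>(s::nat\<times>nat, d::nat). (s, (d,d)))"
  have split: "invs (g \<union> idg D) = invs g \<union> f ` S"
  proof
    show "invs (g \<union> idg D) \<subseteq> invs g \<union> f ` S"
    proof
      fix x assume "x \<in> invs (g \<union> idg D)"
      then obtain i a j b where x: "x = ((i,a),(j,b))" and ia: "(i,a) \<in> g \<union> idg D"
        and jb: "(j,b) \<in> g \<union> idg D" and ij: "i < j" "b < a"
        unfolding invs_def by auto
      have "(i,a) \<in> g" using ia jb ij upwardD[OF up] unfolding idg_def by fastforce
      then show "x \<in> invs g \<union> f ` S"
        using x jb ij unfolding invs_def S_def f_def idg_def by force
    qed
    show "invs g \<union> f ` S \<subseteq> invs (g \<union> idg D)"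
      unfolding invs_def S_def f_def idg_def by auto
  qed
  have "invs g \<inter> f ` S = {}"
    using disj unfolding invs_def S_def f_def by force
  moreover have "finite S" unfolding S_def
    by (rule finite_SigmaI[OF fin]) (rule finite_subset[of _ "{..<snd _}"], auto)
  moreover have "finite (invs g)"
    by (rule finite_subset[of _ "g \<times> g"]) (use fin in \<open>auto simp: invs_def\<close>)
  moreover have "inj_on f S" unfolding f_def inj_on_def by auto
  moreover have "card S = total_crossings g D" unfolding S_def total_crossings_def crossings_def
    by (rule card_SigmaI[OF fin]) (auto intro: finite_subset[of _ "{..<snd _}"])
  ultimately show ?thesis unfolding ninv_def split
    by (simp add: card_Un_disjoint card_image)
qed

lemma invs_add_high_horizontal:
  assumes up: "upward g" and high: "\<And>a b u. (a,b) \<in> g \<Longrightarrow> u \<in> U \<Longrightarrow> b < u"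
  shows "invs (g \<union> idg U) = invs g"
proof -
  have "\<And>a b u. (a,b) \<in> g \<Longrightarrow> u \<in> U \<Longrightarrow> a < u"
    using high upwardD[OF up] le_less_trans by blast
  then show ?thesis unfolding invs_def idg_def using high by (auto; fastforce)
qed

lemma relcomp_partial_bij:
  assumes g: "partial_bij g" and h: "partial_bij h"
  shows "partial_bij (g O h)"
proof -
  have "a = a' \<longleftrightarrow> c = c'" if "(a,c) \<in> g O h" "(a',c') \<in> g O h" for a c a' c'
  proof -
    from that obtain b b' where "(a,b) \<in> g" "(b,c) \<in> h" "(a',b') \<in> g" "(b',c') \<in> h" by blast
    then show ?thesis
      using partial_bijD1[OF g] partial_bijD2[OF g] partial_bijD1[OF h] partial_bijD2[OF h] by metis
  qed
  then show ?thesis unfolding partial_bij_def by fast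
qed

lemma relcomp_upward: "upward g \<Longrightarrow> upward h \<Longrightarrow> upward (g O h)"
  unfolding upward_def by fastforce

lemma is_gen_relcomp: "is_gen n g \<Longrightarrow> is_gen n h \<Longrightarrow> is_gen n (g O h)"
  unfolding is_gen_iff using relcomp_partial_bij relcomp_upward by (auto 4 3 simp: relcomp_unfold)

lemma gmult_SomeD: "gmult x y = Some c \<Longrightarrow> c = x O y \<and> Range x = Domain y \<and> ninv x + ninv y = ninv (x O y)"
  unfolding gmult_def by (auto split: if_splits)

lemma partial_bij_image:
  assumes "partial_bij x" "inj_on f (Domain x)" "inj_on f (Range x)"
  shows "partial_bij ((\<lambda>(a,b). (f a, f b)) ` x)"
proof -
  have "f a = f c \<longleftrightarrow> f b = f d" if ab: "(a,b) \<in> x" and cd: "(c,d) \<in> x" for a b c d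
  proof -
    have "a \<in> Domain x" "c \<in> Domain x" "b \<in> Range x" "d \<in> Range x" using ab cd by auto
    then have "f a = f c \<longleftrightarrow> a = c" "f b = f d \<longleftrightarrow> b = d"
      using assms(2,3) by (simp_all add: inj_on_eq_iff)
    moreover have "a = c \<longleftrightarrow> b = d" using assms(1) ab cd unfolding partial_bij_def by blast
    ultimately show ?thesis by simp
  qed
  then show ?thesis unfolding partial_bij_def by fast
qed

(* A composed strand p \<rightarrow> q \<rightarrow> r crosses exactly the horizontal strands crossed by its
   two halves; hence crossings are additive under composition, and composing with a
   bijection preserves the number of strands.  *)
lemma relcomp_crossings_card:
  assumes fg: "finite g" and bg: "partial_bij g" and bh: "partial_bij h"
    and ug: "upward g" and uh: "upward h" and rd: "Range g = Domain h"
    and dD: "D \<inter> Range g = {}"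
  shows "total_crossings (g O h) D = total_crossings g D + total_crossings h D"
    and "card (g O h) = card g"
proof -
  define T where "T = {(p,q,r). (p,q) \<in> g \<and> (q,r) \<in> h}"
  define outer where "outer = (\<lambda>(p::nat,q::nat,r::nat). (p,r))"
  define left where "left = (\<lambda>(p::nat,q::nat,r::nat). (p,q))"
  define right where "right = (\<lambda>(p::nat,q::nat,r::nat). (q,r))"
  have inj: "inj_on outer T" "inj_on left T" "inj_on right T"
    unfolding inj_on_def T_def outer_def left_def right_def
    using partial_bijD1[OF bg] partial_bijD1[OF bh] partial_bijD2[OF bg] by auto
  have img: "outer ` T = g O h" "left ` T = g" "right ` T = h"
    unfolding T_def outer_def left_def right_def using rd by (force, (auto, force)+)
  have "total_crossings (g O h) D = (\<Sum>t\<in>T. crossings D (outer t))"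
    unfolding total_crossings_def img(1)[symmetric] by (simp add: sum.reindex[OF inj(1)])
  also have "\<dots> = (\<Sum>t\<in>T. crossings D (left t) + crossings D (right t))"
  proof (rule sum.cong[OF refl])
    fix t assume "t \<in> T"
    then obtain p q r where t: "t = (p,q,r)" "(p,q) \<in> g" "(q,r) \<in> h" unfolding T_def by auto
    then have "q \<notin> D" using dD by auto
    then show "crossings D (outer t) = crossings D (left t) + crossings D (right t)"
      using crossings_split[of p q r D] upwardD[OF ug t(2)] upwardD[OF uh t(3)]
      unfolding t outer_def left_def right_def by simp
  qed
  also have "\<dots> = total_crossings g D + total_crossings h D"
    unfolding sum.distrib total_crossings_def img(2,3)[symmetric]
    by (simp add: sum.reindex[OF inj(2)] sum.reindex[OF inj(3)])
  finally show "total_crossings (g O h) D = total_crossings g D + total_crossings h D" .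
  show "card (g O h) = card g"
    using card_image[OF inj(1)] card_image[OF inj(2)] img by simp
qed

lemma ninv_relcomp_add_horizontal:
  assumes fg: "finite g" and fh: "finite h" and bg: "partial_bij g" and bh: "partial_bij h"
    and ug: "upward g" and uh: "upward h" and rd: "Range g = Domain h"
    and dD: "D \<inter> (Domain g \<union> Range g \<union> Range h) = {}"
  shows "ninv (g \<union> idg D) + ninv (h \<union> idg D) = ninv (g O h \<union> idg D)
     \<longleftrightarrow> ninv g + ninv h = ninv (g O h)"
proof -
  have "finite (g O h)" using fg fh by (rule finite_relcomp)
  then have "ninv (g O h \<union> idg D) = ninv (g O h) + total_crossings (g O h) D"
    by (rule ninv_add_horizontal[OF _ relcomp_upward[OF ug uh]]) (use dD rd in blast)
  moreover have "ninv (g \<union> idg D) = ninv g + total_crossings g D"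
    by (rule ninv_add_horizontal[OF fg ug]) (use dD in blast)
  moreover have "ninv (h \<union> idg D) = ninv h + total_crossings h D"
    by (rule ninv_add_horizontal[OF fh uh]) (use dD rd in blast)
  moreover have "total_crossings (g O h) D = total_crossings g D + total_crossings h D"
    by (rule relcomp_crossings_card(1)[OF fg bg bh ug uh rd]) (use dD in blast)
  ultimately show ?thesis by arith
qed

lemma swap_facts:
  assumes bg: "partial_bij g" and ug: "upward g" and pq: "(p,q) \<in> invs g"
  shows "swap_strands g p q = insert (fst p, snd q) (insert (fst q, snd p) (g - {p,q}))"
    and "(fst p, snd q) \<notin> g" and "(fst q, snd p) \<notin> g" and "p \<noteq> q"
    and "(fst p, snd q) \<noteq> (fst q, snd p)" and "p \<in> g" and "q \<in> g"
    and "fst p < fst q" and "snd q < snd p" and "fst q \<le> snd q"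
proof -
  obtain i a j b where pe: "p = (i,a)" "q = (j,b)" by (cases p, cases q) auto
  have h: "(i,a) \<in> g" "(j,b) \<in> g" "i < j" "b < a" using pq pe unfolding invs_def by auto
  show "swap_strands g p q = insert (fst p, snd q) (insert (fst q, snd p) (g - {p,q}))"
    unfolding swap_strands_def by (simp only: Un_insert_right Un_empty_right)
  show "(fst p, snd q) \<notin> g" using partial_bijD1[OF bg h(1), of b] h pe by auto
  show "(fst q, snd p) \<notin> g" using partial_bijD1[OF bg h(2), of a] h pe by auto
  show "p \<noteq> q" "(fst p, snd q) \<noteq> (fst q, snd p)" "p \<in> g" "q \<in> g"
    "fst p < fst q" "snd q < snd p" "fst q \<le> snd q" using pe h upwardD[OF ug h(2)] by auto
qed

lemma swap_Domain_Range:
  assumes "(p,q) \<in> invs g"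
  shows "Domain (swap_strands g p q) \<subseteq> Domain g" "Range (swap_strands g p q) \<subseteq> Range g"
  using assms unfolding swap_strands_def invs_def by force+

lemma swap_is_gen:
  assumes ig: "is_gen n g" and pq: "(p,q) \<in> invs g"
  shows "is_gen n (swap_strands g p q)"
proof -
  have bg: "partial_bij g" and ug: "upward g" and sg: "g \<subseteq> {1..n} \<times> {1..n}"
    using ig is_gen_iff by auto
  obtain i a j b where pe: "p = (i,a)" "q = (j,b)" by (cases p, cases q) auto
  note sf = swap_facts[OF bg ug pq, unfolded pe fst_conv snd_conv]
  have "i \<in> {1..n}" "a \<in> {1..n}" "j \<in> {1..n}" "b \<in> {1..n}" using sf(6,7) sg by blast+
  then have "swap_strands g p q \<subseteq> {1..n} \<times> {1..n}" unfolding pe sf(1) using sg by blast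
  moreover have "upward (swap_strands g p q)"
    unfolding pe sf(1) using ug sf unfolding upward_def by auto
  moreover have "partial_bij (swap_strands g p q)"
  proof -
    define R where "R = g - {(i,a),(j,b)}"
    have "i \<notin> fst ` R" "j \<notin> fst ` R" "a \<notin> snd ` R" "b \<notin> snd ` R"
      using sf(6,7) partial_bijD1[OF bg] partial_bijD2[OF bg] unfolding R_def by force+
    moreover have "inj_on fst R" "inj_on snd R"
      using bg unfolding partial_bij_iff_inj R_def by (auto intro: inj_on_subset)
    ultimately show ?thesis
      unfolding pe sf(1) partial_bij_iff_inj R_def[symmetric] using sf(8,9) by auto
  qed
  ultimately show ?thesis using is_gen_iff by blast
qed

lemma swap_card:
  assumes fg: "finite g" and bg: "partial_bij g" and ug: "upward g" and pq: "(p,q) \<in> invs g"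
  shows "card (swap_strands g p q) = card g"
proof -
  note sf = swap_facts[OF bg ug pq]
  define R where "R = g - {p,q}"
  have "finite R" "p \<notin> R" "q \<notin> R" "(fst p, snd q) \<notin> R" "(fst q, snd p) \<notin> R"
    using fg sf(2,3) unfolding R_def by auto
  moreover have "g = insert p (insert q R)" using sf(6,7) unfolding R_def by blast
  ultimately show ?thesis unfolding sf(1) R_def[symmetric] using sf(4,5) by simp
qed

lemma swap_crossings:
  assumes fg: "finite g" and bg: "partial_bij g" and ug: "upward g" and pq: "(p,q) \<in> invs g"
    and jD: "fst q \<notin> D"
  shows "total_crossings (swap_strands g p q) D = total_crossings g D"
proof -
  note sf = swap_facts[OF bg ug pq]
  have g: "g = insert p (insert q (g - {p,q}))" using sf(6,7) by blast
  have "total_crossings g D = crossings D p + (crossings D q + total_crossings (g - {p,q}) D)"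
    unfolding total_crossings_def by (subst g) (use fg sf in simp)
  moreover have "total_crossings (swap_strands g p q) D =
      crossings D (fst p, snd q) + (crossings D (fst q, snd p) + total_crossings (g - {p,q}) D)"
    unfolding total_crossings_def sf(1) using fg sf by simp
  moreover have "crossings D p = crossings D (fst p, fst q) + crossings D (fst q, snd p)"
    using crossings_split[of "fst p" "fst q" "snd p" D] sf jD by (cases p) auto
  moreover have "crossings D (fst p, snd q) = crossings D (fst p, fst q) + crossings D (fst q, snd q)"
    using crossings_split[of "fst p" "fst q" "snd q" D] sf jD by auto
  ultimately show ?thesis by (cases q) simp
qed

section \<open>Idempotents and the strands algebra\<close>

lemma gmult_idg_left: "gmult (idg S) y = Some c \<longleftrightarrow> S = Domain y \<and> c = y"
proof -
  have "S = Domain y \<Longrightarrow> idg S O y = y" unfolding idg_def by auto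
  then show ?thesis unfolding gmult_def ninv_def invs_idg Domain_Range_idg by auto
qed

lemma gmult_idg_right: "gmult y (idg S) = Some c \<longleftrightarrow> S = Range y \<and> c = y"
proof -
  have "S = Range y \<Longrightarrow> y O idg S = y" unfolding idg_def by auto
  then show ?thesis unfolding gmult_def ninv_def invs_idg Domain_Range_idg by auto
qed

lemma emult_idempotents_left:
  assumes E: "\<And>e. e \<in> E \<Longrightarrow> \<exists>S. e = idg S"
  shows "emult E X = {y\<in>X. idg (Domain y) \<in> E}"
proof (rule set_eqI)
  fix c
  have "gmult e y = Some c \<longleftrightarrow> e = idg (Domain c) \<and> y = c" if "e \<in> E" for e y
    using E[OF that] gmult_idg_left by auto
  then have "{(e,y). e \<in> E \<and> y \<in> X \<and> gmult e y = Some c} =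
      (if idg (Domain c) \<in> E \<and> c \<in> X then {(idg (Domain c), c)} else {})"
    by auto
  then show "c \<in> emult E X \<longleftrightarrow> c \<in> {y\<in>X. idg (Domain y) \<in> E}" unfolding emult_def by auto
qed

lemma emult_idempotents_right:
  assumes E: "\<And>e. e \<in> E \<Longrightarrow> \<exists>S. e = idg S"
  shows "emult X E = {y\<in>X. idg (Range y) \<in> E}"
proof (rule set_eqI)
  fix c
  have "gmult y e = Some c \<longleftrightarrow> e = idg (Range c) \<and> y = c" if "e \<in> E" for e y
    using E[OF that] gmult_idg_right by auto
  then have "{(y,e). y \<in> X \<and> e \<in> E \<and> gmult y e = Some c} =
      (if idg (Range c) \<in> E \<and> c \<in> X then {(c, idg (Range c))} else {})"
    by auto
  then show "c \<in> emult X E \<longleftrightarrow> c \<in> {y\<in>X. idg (Range y) \<in> E}" unfolding emult_def by auto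
qed

lemma emult_idempotents_sandwich:
  assumes E: "\<And>e. e \<in> E \<Longrightarrow> \<exists>S. e = idg S"
  shows "emult (emult E X) E = {y\<in>X. idg (Domain y) \<in> E \<and> idg (Range y) \<in> E}"
proof -
  have "emult E X = {y\<in>X. idg (Domain y) \<in> E}" by (rule emult_idempotents_left) (use E in blast)
  moreover have "emult (emult E X) E = {y\<in>emult E X. idg (Range y) \<in> E}"
    by (rule emult_idempotents_right) (use E in blast)
  ultimately show ?thesis by auto
qed

lemma strands_algI:
  assumes "\<forall>c\<in>X. is_gen m c \<and> card c = k"
  shows "X \<in> strands_alg m k"
  using assms finite_subset[OF _ finite_gens[of m]] unfolding strands_alg_def by blast

lemma strands_alg_gens: "Y \<in> strands_alg m k \<Longrightarrow> \<forall>g\<in>Y. is_gen m g"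
  unfolding strands_alg_def by auto

lemma strands_alg_eadd: "a \<in> strands_alg m k \<Longrightarrow> b \<in> strands_alg m k \<Longrightarrow> eadd a b \<in> strands_alg m k"
  unfolding strands_alg_def eadd_def by auto

lemma strands_alg_emult:
  assumes "a \<in> strands_alg m k" "b \<in> strands_alg m k"
  shows "emult a b \<in> strands_alg m k"
proof (rule strands_algI, intro ballI)
  fix c assume "c \<in> emult a b"
  then have "{(x,y). x \<in> a \<and> y \<in> b \<and> gmult x y = Some c} \<noteq> {}"
    unfolding emult_def by (metis (no_types, lifting) card.empty even_zero mem_Collect_eq)
  then obtain x y where xy: "x \<in> a" "y \<in> b" "gmult x y = Some c" by blast
  have gx: "is_gen m x" "card x = k" and gy: "is_gen m y"
    using xy assms unfolding strands_alg_def by auto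
  note c = gmult_SomeD[OF xy(3)]
  show "is_gen m c \<and> card c = k"
    using is_gen_relcomp[OF gx(1) gy] relcomp_crossings_card(2)[of x y "{}"] c gx gy
      is_gen_finite is_gen_iff by auto
qed

lemma strands_alg_ediff:
  assumes "a \<in> strands_alg m k"
  shows "ediff a \<in> strands_alg m k"
proof (rule strands_algI, intro ballI)
  fix c assume "c \<in> ediff a"
  then have "{(x,p,q). x \<in> a \<and> (p,q) \<in> invs x \<and> c = swap_strands x p q \<and> ninv c + 1 = ninv x} \<noteq> {}"
    unfolding ediff_def by (metis (no_types, lifting) card.empty even_zero mem_Collect_eq)
  then obtain x p q where x: "x \<in> a" "(p,q) \<in> invs x" "c = swap_strands x p q" by blast
  have "is_gen m x" "card x = k" using x assms unfolding strands_alg_def by auto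
  then show "is_gen m c \<and> card c = k"
    using swap_is_gen swap_card is_gen_finite is_gen_iff x by metis
qed

lemma a_elt_gen:
  assumes ip: "is_gen m psi" and y: "y \<in> a_elt m k psi"
  shows "is_gen m y" "card y = k"
proof -
  obtain U where U: "y = psi \<union> idg U" "U \<subseteq> {1..m}" "U \<inter> (Domain psi \<union> Range psi) = {}"
    "card (Domain psi \<union> U) = k" using y unfolding a_elt_def by auto
  have "partial_bij y" using partial_bij_add_horizontal[OF _ U(3)] ip U(1) is_gen_iff by blast
  moreover have "y \<subseteq> {1..m} \<times> {1..m}" "upward y"
    using ip U(1,2) unfolding is_gen_iff upward_def idg_def by auto
  ultimately show "is_gen m y" using is_gen_iff by blast
  then show "card y = k"
    using card_Domain_Range(1)[OF is_gen_finite \<open>partial_bij y\<close>] U(1,4) Domain_Range_idg(3) by simp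
qed

lemma a_elt_in_strands_alg: "is_gen m psi \<Longrightarrow> a_elt m k psi \<in> strands_alg m k"
  using a_elt_gen by (blast intro: strands_algI)

lemma gen_split_moving:
  assumes ig: "is_gen m g"
  defines "psi \<equiv> {(a,b)\<in>g. a < b}" and "F \<equiv> {a. (a,a) \<in> g}"
  shows "g = psi \<union> idg F" "F \<subseteq> {1..m}" "F \<inter> (Domain psi \<union> Range psi) = {}"
proof -
  have bg: "partial_bij g" "upward g" using ig is_gen_iff by auto
  show "g = psi \<union> idg F"
    unfolding psi_def F_def idg_def using upwardD[OF bg(2)] by (auto simp: le_less)
  show "F \<subseteq> {1..m}" using ig unfolding F_def is_gen_def by auto
  show "F \<inter> (Domain psi \<union> Range psi) = {}"
    unfolding F_def psi_def using partial_bijD1[OF bg(1)] partial_bijD2[OF bg(1)] by fastforce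
qed

(* The terms of a_k(psi) are determined by their domain, so the idempotent at the domain of a
   term picks out exactly that term.  *)
lemma idempotent_times_a_elt:
  assumes g: "g \<in> a_elt m k psi"
  shows "emult {idg (Domain g)} (a_elt m k psi) = {g}"
proof -
  have "y = g" if y: "y \<in> a_elt m k psi" "Domain y = Domain g" for y
  proof -
    obtain U F where U: "y = psi \<union> idg U" "U \<inter> (Domain psi \<union> Range psi) = {}"
      and F: "g = psi \<union> idg F" "F \<inter> (Domain psi \<union> Range psi) = {}"
      using y(1) g unfolding a_elt_def by auto
    have "Domain psi \<union> U = Domain psi \<union> F"
      using y(2) unfolding U(1) F(1) Domain_Range_idg(3) .
    then have "U = F" using U(2) F(2) by blast
    then show "y = g" using U(1) F(1) by simp
  qed
  then have "y \<in> a_elt m k psi \<and> idg (Domain y) \<in> {idg (Domain g)} \<longleftrightarrow> y = g" for y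
    using g idg_inj by blast
  then have "{y \<in> a_elt m k psi. idg (Domain y) \<in> {idg (Domain g)}} = {g}" by blast
  moreover have "emult {idg (Domain g)} (a_elt m k psi) =
      {y \<in> a_elt m k psi. idg (Domain y) \<in> {idg (Domain g)}}"
    by (rule emult_idempotents_left) blast
  ultimately show ?thesis by simp
qed

lemma idg_in_strands_alg:
  assumes "s \<subseteq> {1..m}" "card s = k"
  shows "{idg s} \<in> strands_alg m k"
  using assms card_idg by (intro strands_algI) (auto simp: is_gen_def idg_def)

lemma a_elt_card_Domain: "y \<in> a_elt m k psi \<Longrightarrow> card (Domain y) = k"
  unfolding a_elt_def by (auto simp: Domain_Range_idg)

lemma arc_alg_I_s: "s \<subseteq> {1..K} \<Longrightarrow> card s = i \<Longrightarrow> I_s N M s \<in> arc_alg N K seg M i"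
  unfolding arc_alg_def by (rule gen_subalg.base) blast

lemma arc_alg_I_a_I:
  "ext_gen N seg psi \<Longrightarrow> \<forall>(a,b)\<in>psi. a < b \<Longrightarrow>
    emult (emult (I_tot N K M i) (a_elt N i psi)) (I_tot N K M i) \<in> arc_alg N K seg M i"
  unfolding arc_alg_def by (rule gen_subalg.base) blast

lemma arc_alg_zero: "{} \<in> arc_alg N K seg M i"
  unfolding arc_alg_def by (rule gen_subalg.zero)

lemma arc_alg_eadd: "x \<in> arc_alg N K seg M i \<Longrightarrow> y \<in> arc_alg N K seg M i \<Longrightarrow> eadd x y \<in> arc_alg N K seg M i"
  unfolding arc_alg_def by (rule gen_subalg.add)

lemma arc_alg_emult: "x \<in> arc_alg N K seg M i \<Longrightarrow> y \<in> arc_alg N K seg M i \<Longrightarrow> emult x y \<in> arc_alg N K seg M i"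
  unfolding arc_alg_def by (rule gen_subalg.mult)

lemma dga_iso_image:
  assumes inj: "inj_on L A"
    and closed: "\<And>a b. a \<in> A \<Longrightarrow> b \<in> A \<Longrightarrow> eadd a b \<in> A \<and> emult a b \<in> A \<and> ediff a \<in> A"
    and hom: "\<And>a b. a \<in> A \<Longrightarrow> b \<in> A \<Longrightarrow>
      L (eadd a b) = eadd (L a) (L b) \<and> L (emult a b) = emult (L a) (L b) \<and> L (ediff a) = ediff (L a)"
  shows "dga_iso (L ` A) A"
proof -
  define f where "f = inv_into A L"
  have bij: "bij_betw f (L ` A) A"
    unfolding f_def by (rule bij_betw_inv_into[OF inj_on_imp_bij_betw[OF inj]])
  have f_L: "f (L a) = a" if "a \<in> A" for a
    unfolding f_def using inv_into_f_f[OF inj that] .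
  have "f (eadd x y) = eadd (f x) (f y) \<and> f (emult x y) = emult (f x) (f y) \<and> f (ediff x) = ediff (f x)"
    if xy: "x \<in> L ` A" "y \<in> L ` A" for x y
  proof -
    obtain a b where ab: "a \<in> A" "b \<in> A" "x = L a" "y = L b" using xy by blast
    then show ?thesis using closed[OF ab(1,2)] hom[OF ab(1,2)] f_L by metis
  qed
  then show ?thesis unfolding dga_iso_def using bij by blast
qed

lemma inj_image_avoids_fixed:
  assumes inj: "inj_on f (A \<union> U)" and disj: "A \<inter> U = {}" and fixed: "\<And>a. a \<in> A \<Longrightarrow> f a = a"
  shows "f ` U \<inter> A = {}"
proof (rule equals0I)
  fix a assume "a \<in> f ` U \<inter> A"
  then obtain u where u: "u \<in> U" "a \<in> A" "f u = a" by blast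
  then have "f u = f a" using fixed by simp
  then have "u = a" using inj u(1,2) by (auto dest: inj_onD)
  then show False using u disj by blast
qed

section \<open>The arc diagram W_n\<close>

lemma W_M_low: "a \<le> n - 1 \<Longrightarrow> W_M n a = a"
  unfolding W_M_def by simp

lemma W_M_range: "1 \<le> a \<Longrightarrow> a \<le> 2*n-2 \<Longrightarrow> W_M n a \<in> {1..n-1}"
  unfolding W_M_def by auto

lemma W_M_inj_upper: "inj_on (W_M n) {n..2*n-2}"
  unfolding W_M_def inj_on_def by auto

lemma W_M_image_low:
  assumes "\<forall>(a,b)\<in>g. a \<le> n-1 \<and> b \<le> n-1"
  shows "(\<lambda>(a,b). (W_M n a, W_M n b)) ` g = g"
proof -
  have "\<forall>s\<in>g. (\<lambda>(a,b). (W_M n a, W_M n b)) s = s" using assms W_M_low by auto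
  then show ?thesis by (metis (no_types, lifting) image_cong image_ident)
qed

lemma W_strand:
  assumes n2: "2 \<le> n" and e: "ext_gen (2*n-2) (W_seg n) x" and ab: "(a,b) \<in> x"
  shows "1 \<le> a" "b \<le> 2*n-2" "a \<le> b" "(a \<le> n - 1 \<and> b \<le> n - 1) \<or> (n \<le> a \<and> a = b)"
proof -
  have "is_gen (2*n-2) x" and seg: "W_seg n a = W_seg n b"
    using e ab unfolding ext_gen_def by auto
  then show "1 \<le> a" "b \<le> 2*n-2" "a \<le> b" using ab unfolding is_gen_def by auto
  with seg n2 show "(a \<le> n - 1 \<and> b \<le> n - 1) \<or> (n \<le> a \<and> a = b)"
    unfolding W_seg_def by (auto split: if_splits)
qed

lemma W_M_inj_low_upper:
  assumes "A \<subseteq> {..n-1}" "U \<subseteq> {n..2*n-2}" "A \<inter> W_M n ` U = {}"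
  shows "inj_on (W_M n) (A \<union> U)"
proof -
  have fix_A: "\<forall>a\<in>A. W_M n a = a" using assms(1) W_M_low by (simp add: subset_iff)
  then have "inj_on (W_M n) A" by (metis inj_onI)
  moreover have "inj_on (W_M n) U" using assms(2) inj_on_subset[OF W_M_inj_upper] by blast
  moreover have "W_M n ` A = A" using fix_A by force
  ultimately show ?thesis using assms(3) by (auto simp: inj_on_Un)
qed

definition proj :: "nat \<Rightarrow> gen \<Rightarrow> gen" where
  "proj n x = (\<lambda>(a,b). (W_M n a, W_M n b)) ` x"

definition W_gen :: "nat \<Rightarrow> gen \<Rightarrow> bool" where
  "W_gen n x \<longleftrightarrow> ext_gen (2*n-2) (W_seg n) x \<and> inj_on (W_M n) (Domain x) \<and> inj_on (W_M n) (Range x)"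

definition upper_points :: "nat \<Rightarrow> gen \<Rightarrow> nat set" where
  "upper_points n x = {a. (a,a) \<in> x \<and> n \<le> a}"

definition drop_strands :: "gen \<Rightarrow> nat set \<Rightarrow> gen" where
  "drop_strands g D = {(a,b)\<in>g. a \<notin> D}"

definition admissible :: "nat \<Rightarrow> gen \<Rightarrow> nat set \<Rightarrow> bool" where
  "admissible n g U \<longleftrightarrow> U \<subseteq> {n..2*n-2} \<and> (\<forall>u\<in>U. (W_M n u, W_M n u) \<in> g)"

definition lift :: "nat \<Rightarrow> gen \<Rightarrow> nat set \<Rightarrow> gen" where
  "lift n g U = drop_strands g (W_M n ` U) \<union> idg U"

definition lift_elt :: "nat \<Rightarrow> elt \<Rightarrow> elt" where
  "lift_elt n Y = {x. W_gen n x \<and> proj n x \<in> Y}"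

lemma drop_strands_horizontal:
  assumes bg: "partial_bij g" and fix_D: "\<And>d. d \<in> D \<Longrightarrow> (d,d) \<in> g"
  shows "g = drop_strands g D \<union> idg D"
    "Domain (drop_strands g D) \<inter> D = {}" "Range (drop_strands g D) \<inter> D = {}"
  using partial_bijD1[OF bg] partial_bijD2[OF bg] fix_D
  unfolding drop_strands_def idg_def by (auto, blast+)

lemma Domain_proj: "Domain (proj n x) = W_M n ` Domain x"
  unfolding proj_def by force

lemma admissible_relcomp:
  "admissible n g U \<Longrightarrow> admissible n h U \<Longrightarrow> admissible n (g O h) U"
  unfolding admissible_def by blast

(* A horizontal strand of a composite of upward generators is composed of horizontal strands.  *)
lemma admissible_of_relcomp:
  assumes ug: "upward g" and uh: "upward h" and a: "admissible n (g O h) U"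
  shows "admissible n g U" "admissible n h U"
proof -
  have "(d,d) \<in> g \<and> (d,d) \<in> h" if "(d,d) \<in> g O h" for d
  proof -
    from that obtain q where q: "(d,q) \<in> g" "(q,d) \<in> h" by blast
    then have "q = d" using upwardD[OF ug q(1)] upwardD[OF uh q(2)] by simp
    then show ?thesis using q by simp
  qed
  then show "admissible n g U" "admissible n h U" using a unfolding admissible_def by auto
qed

lemma invs_drop_strands:
  "invs (drop_strands g D) = {(p,q) \<in> invs g. fst p \<notin> D \<and> fst q \<notin> D}"
  unfolding invs_def drop_strands_def by auto

lemma admissible_swap:
  assumes "admissible n g U" "fst p \<notin> W_M n ` U" "fst q \<notin> W_M n ` U"
  shows "admissible n (swap_strands g p q) U"
  using assms unfolding admissible_def swap_strands_def by force

lemma admissible_unswap: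
  assumes ig: "is_gen m g" and pq: "(p,q) \<in> invs g" and a: "admissible n (swap_strands g p q) U"
  shows "admissible n g U" "fst p \<notin> W_M n ` U" "fst q \<notin> W_M n ` U"
proof -
  have bg: "partial_bij g" "upward g" using ig is_gen_iff by auto
  note sf = swap_facts[OF bg pq]
  have bs: "partial_bij (swap_strands g p q)" using swap_is_gen[OF ig pq] is_gen_iff by auto
  have new: "(fst p, snd q) \<in> swap_strands g p q" "(fst q, snd p) \<in> swap_strands g p q"
    unfolding sf(1) by auto
  have "(d,d) \<in> g \<and> fst p \<noteq> d \<and> fst q \<noteq> d" if d: "(d,d) \<in> swap_strands g p q" for d
  proof (intro conjI)
    have "(d,d) \<noteq> (fst p, snd q)" "(d,d) \<noteq> (fst q, snd p)" using sf(8,9,10) by auto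
    then show "(d,d) \<in> g" using d unfolding sf(1) by auto
    show "fst p \<noteq> d" using partial_bijD1[OF bs new(1)] d sf(8,9,10) by force
    show "fst q \<noteq> d" using partial_bijD1[OF bs new(2)] d sf(9,10) by force
  qed
  then show "admissible n g U" "fst p \<notin> W_M n ` U" "fst q \<notin> W_M n ` U"
    using a unfolding admissible_def by auto
qed

lemma lift_elt_eadd: "lift_elt n (eadd a b) = eadd (lift_elt n a) (lift_elt n b)"
  unfolding lift_elt_def eadd_def by auto

lemma lift_elt_empty: "lift_elt n {} = {}"
  unfolding lift_elt_def by simp

lemma lift_elt_insert: "g \<notin> Y \<Longrightarrow> lift_elt n (insert g Y) = eadd (lift_elt n {g}) (lift_elt n Y)"
  unfolding lift_elt_def eadd_def by auto

context
  fixes n :: nat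
  assumes n2: "2 \<le> n"
begin

(* Anatomy of a lift: with D = M ` U and g0 the strands of g not starting in D, g is g0 plus
   horizontal strands at D, and the lift is g0 plus horizontal strands at U, which lie above
   every strand of g0 and so create no inversions.  *)
lemma lift_structure:
  assumes ig: "is_gen (n-1) g" and ad: "admissible n g U"
  defines "D \<equiv> W_M n ` U" and "g0 \<equiv> drop_strands g (W_M n ` U)"
  shows "g = g0 \<union> idg D" "Domain g0 \<inter> D = {}" "Range g0 \<inter> D = {}"
    and "lift n g U = g0 \<union> idg U" and "is_gen (n-1) g0"
    and "Domain g0 \<subseteq> {1..n-1}" "Range g0 \<subseteq> {1..n-1}" and "U \<subseteq> {n..2*n-2}"
    and "invs (lift n g U) = invs g0"
proof -
  have bg: "partial_bij g" and sg: "g \<subseteq> {1..n-1} \<times> {1..n-1}" using ig is_gen_iff by auto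
  have "\<And>d. d \<in> D \<Longrightarrow> (d,d) \<in> g" using ad unfolding admissible_def D_def by auto
  from drop_strands_horizontal[OF bg this]
  show "g = g0 \<union> idg D" "Domain g0 \<inter> D = {}" "Range g0 \<inter> D = {}"
    unfolding g0_def D_def by simp_all
  show "lift n g U = g0 \<union> idg U" unfolding lift_def g0_def ..
  show ig0: "is_gen (n-1) g0" unfolding g0_def drop_strands_def by (rule is_gen_subset[OF ig]) auto
  then show "Domain g0 \<subseteq> {1..n-1}" "Range g0 \<subseteq> {1..n-1}" unfolding is_gen_def by auto
  show U: "U \<subseteq> {n..2*n-2}" using ad unfolding admissible_def by auto
  have "b < u" if "(a,b) \<in> g0" "u \<in> U" for a b u
    using that ig0 U n2 unfolding is_gen_def by force
  then have "invs (g0 \<union> idg U) = invs g0"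
    using invs_add_high_horizontal ig0 is_gen_iff by blast
  then show "invs (lift n g U) = invs g0" unfolding lift_def g0_def .
qed

lemma lift_W_gen:
  assumes ig: "is_gen (n-1) g" and ad: "admissible n g U"
  shows "W_gen n (lift n g U)" "proj n (lift n g U) = g" "upper_points n (lift n g U) = U"
proof -
  define D where "D = W_M n ` U"
  define g0 where "g0 = drop_strands g D"
  note ls = lift_structure[OF ig ad, folded D_def g0_def]
  have g0_low: "(a,b) \<in> g0 \<Longrightarrow> 1 \<le> a \<and> a \<le> b \<and> b \<le> n-1" for a b
    using ls(5) unfolding is_gen_def by auto
  have "U \<inter> {1..n-1} = {}" using ls(8) n2 by fastforce
  then have disj: "U \<inter> (Domain g0 \<union> Range g0) = {}" using ls(6,7) by blast
  have "is_gen (2*n-2) (g0 \<union> idg U)"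
    unfolding is_gen_iff
  proof (intro conjI)
    show "g0 \<union> idg U \<subseteq> {1..2*n-2} \<times> {1..2*n-2}" using g0_low ls(8) n2 unfolding idg_def by fastforce
    show "upward (g0 \<union> idg U)" using g0_low unfolding upward_def idg_def by auto
    show "partial_bij (g0 \<union> idg U)"
      using partial_bij_add_horizontal[OF _ disj] ls(5) is_gen_iff by blast
  qed
  moreover have "\<forall>(a,b)\<in>g0 \<union> idg U. W_seg n a = W_seg n b"
    using g0_low unfolding idg_def W_seg_def by fastforce
  moreover have "inj_on (W_M n) (Domain g0 \<union> U)" "inj_on (W_M n) (Range g0 \<union> U)"
    using W_M_inj_low_upper ls(2,3,6,7,8) unfolding D_def by (metis atLeastAtMost_iff atMost_iff subset_iff)+
  ultimately show "W_gen n (lift n g U)"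
    unfolding W_gen_def ext_gen_def ls(4) Domain_Range_idg by blast
  have "(\<lambda>(a,b). (W_M n a, W_M n b)) ` g0 = g0"
    by (intro W_M_image_low) (fastforce dest: g0_low)
  moreover have "(\<lambda>(a,b). (W_M n a, W_M n b)) ` idg U = idg D"
    unfolding idg_def D_def by force
  ultimately show "proj n (lift n g U) = g" unfolding ls(4) proj_def image_Un using ls(1) by simp
  show "upper_points n (lift n g U) = U"
    unfolding ls(4) upper_points_def idg_def using g0_low ls(8) n2 by fastforce
qed

lemma W_gen_split:
  assumes w: "W_gen n x"
  defines "lo \<equiv> {(a,b)\<in>x. a \<le> n-1}"
  shows "x = lo \<union> idg (upper_points n x)" "\<forall>(a,b)\<in>lo. 1 \<le> a \<and> a \<le> b \<and> b \<le> n-1"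
    "upper_points n x \<subseteq> {n..2*n-2}" "Domain lo \<inter> W_M n ` upper_points n x = {}"
proof -
  have e: "ext_gen (2*n-2) (W_seg n) x" and iD: "inj_on (W_M n) (Domain x)"
    using w unfolding W_gen_def by auto
  note strand = W_strand[OF n2 e]
  have "(a,b) \<in> lo \<union> idg (upper_points n x)" if "(a,b) \<in> x" for a b
    using strand(4)[OF that] that unfolding lo_def upper_points_def idg_def by auto
  then show "x = lo \<union> idg (upper_points n x)"
    unfolding lo_def upper_points_def idg_def by auto
  show lo: "\<forall>(a,b)\<in>lo. 1 \<le> a \<and> a \<le> b \<and> b \<le> n-1"
    unfolding lo_def by (auto dest: strand(1) strand(3) strand(4))
  show U: "upper_points n x \<subseteq> {n..2*n-2}"
    unfolding upper_points_def using strand(2) by auto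
  have "a \<noteq> W_M n u" if "a \<in> Domain lo" "u \<in> upper_points n x" for a u
  proof
    assume a: "a = W_M n u"
    have "a \<le> n-1" using that(1) lo by auto
    then have "W_M n a = W_M n u" using a W_M_low by simp
    moreover have "a \<in> Domain x" "u \<in> Domain x" using that unfolding lo_def upper_points_def by auto
    ultimately have "a = u" using iD by (auto dest: inj_onD)
    then show False using \<open>a \<le> n-1\<close> that(2) U n2 by fastforce
  qed
  then show "Domain lo \<inter> W_M n ` upper_points n x = {}" by blast
qed

lemma W_gen_decompose:
  assumes w: "W_gen n x"
  shows "is_gen (n-1) (proj n x)" "admissible n (proj n x) (upper_points n x)"
    "x = lift n (proj n x) (upper_points n x)"
proof -
  define U where "U = upper_points n x"
  define lo where "lo = {(a,b)\<in>x. a \<le> n-1}"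
  note split = W_gen_split[OF w, folded lo_def U_def]
  have e: "ext_gen (2*n-2) (W_seg n) x" and iD: "inj_on (W_M n) (Domain x)"
    and iR: "inj_on (W_M n) (Range x)" using w unfolding W_gen_def by auto
  have bx: "partial_bij x" using e unfolding ext_gen_def is_gen_iff by auto
  have "(\<lambda>(a,b). (W_M n a, W_M n b)) ` lo = lo"
    using split(2) by (intro W_M_image_low) auto
  moreover have "(\<lambda>(a,b). (W_M n a, W_M n b)) ` idg U = idg (W_M n ` U)"
    unfolding idg_def by force
  ultimately have proj_x: "proj n x = lo \<union> idg (W_M n ` U)"
    unfolding proj_def by (subst split(1)) (simp only: image_Un)
  have "W_M n ` U \<subseteq> {1..n-1}" using split(3) W_M_range n2 by force
  moreover have "\<forall>(a,b)\<in>lo. 1 \<le> a \<and> a \<le> b \<and> b \<le> n-1" by (rule split(2))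
  ultimately have "proj n x \<subseteq> {1..n-1} \<times> {1..n-1}" "upward (proj n x)"
    unfolding proj_x upward_def idg_def by fastforce+
  moreover have "partial_bij (proj n x)" unfolding proj_def by (rule partial_bij_image[OF bx iD iR])
  ultimately show "is_gen (n-1) (proj n x)" unfolding is_gen_iff by blast
  show "admissible n (proj n x) U"
    unfolding admissible_def proj_x idg_def using split(3) by auto
  have drop_eq: "drop_strands (proj n x) (W_M n ` U) = lo"
    unfolding proj_x drop_strands_def idg_def using split(4) by auto
  show "x = lift n (proj n x) U" unfolding lift_def drop_eq by (rule split(1))
qed

lemma composable_drop_strands_iff:
  assumes ig: "is_gen (n-1) g" and ag: "admissible n g U"
    and ih: "is_gen (n-1) h" and ah: "admissible n h U"
  shows "Range g = Domain h \<longleftrightarrow>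
    Range (drop_strands g (W_M n ` U)) = Domain (drop_strands h (W_M n ` U))"
proof -
  define D where "D = W_M n ` U"
  define g0 where "g0 = drop_strands g D"
  define h0 where "h0 = drop_strands h D"
  note sg = lift_structure[OF ig ag, folded D_def g0_def]
  note sh = lift_structure[OF ih ah, folded D_def h0_def]
  have "Range g = Range g0 \<union> D" by (subst sg(1)) (rule Domain_Range_idg(4))
  moreover have "Domain h = Domain h0 \<union> D" by (subst sh(1)) (rule Domain_Range_idg(3))
  ultimately show ?thesis unfolding D_def[symmetric] g0_def[symmetric] h0_def[symmetric]
    using Un_disjoint_cancel[OF sg(3) sh(2)] by simp
qed

lemma lift_Range_Domain_iff:
  assumes ig: "is_gen (n-1) g" and ag: "admissible n g U"
    and ih: "is_gen (n-1) h" and ah: "admissible n h U'"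
  shows "Range (lift n g U) = Domain (lift n h U') \<longleftrightarrow> U = U' \<and> Range g = Domain h"
proof -
  define g0 where "g0 = drop_strands g (W_M n ` U)"
  define h0 where "h0 = drop_strands h (W_M n ` U')"
  note sg = lift_structure[OF ig ag, folded g0_def]
  note sh = lift_structure[OF ih ah, folded h0_def]
  have "U \<inter> {1..n-1} = {}" "U' \<inter> {1..n-1} = {}" using sg(8) sh(8) n2 by fastforce+
  then have "Range g0 \<union> U = Domain h0 \<union> U' \<longleftrightarrow> Range g0 = Domain h0 \<and> U = U'"
    by (rule Un_separated_eq_iff[OF sg(7) sh(6)])
  moreover have "U = U' \<Longrightarrow> Range g = Domain h \<longleftrightarrow> Range g0 = Domain h0"
    using composable_drop_strands_iff[OF ig ag ih] ah unfolding g0_def h0_def by simp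
  ultimately show ?thesis unfolding sg(4) sh(4) Domain_Range_idg by blast
qed

lemma lift_relcomp:
  assumes ig: "is_gen (n-1) g" and ag: "admissible n g U"
    and ih: "is_gen (n-1) h" and ah: "admissible n h U" and rd: "Range g = Domain h"
  shows "lift n g U O lift n h U = lift n (g O h) U"
    and "ninv (lift n g U) + ninv (lift n h U) = ninv (lift n (g O h) U)
         \<longleftrightarrow> ninv g + ninv h = ninv (g O h)"
proof -
  define D where "D = W_M n ` U"
  define g0 where "g0 = drop_strands g D"
  define h0 where "h0 = drop_strands h D"
  note sg = lift_structure[OF ig ag, folded D_def g0_def]
  note sh = lift_structure[OF ih ah, folded D_def h0_def]
  note igh = is_gen_relcomp[OF ig ih]
  note agh = admissible_relcomp[OF ag ah]
  note sgh = lift_structure[OF igh agh, folded D_def]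
  have rd0: "Range g0 = Domain h0"
    using composable_drop_strands_iff[OF ig ag ih ah] rd unfolding g0_def h0_def D_def by simp
  have gh: "g O h = g0 O h0 \<union> idg D"
    by (subst sg(1), subst sh(1), rule relcomp_add_horizontal) (use sg(3) sh(2) in simp_all)
  have drop_gh: "drop_strands (g O h) D = g0 O h0"
    unfolding gh drop_strands_def idg_def using sg(2) by auto
  have "Range g0 \<inter> U = {}" "Domain h0 \<inter> U = {}" using sg(7,8) sh(6) n2 by fastforce+
  then have "lift n g U O lift n h U = g0 O h0 \<union> idg U"
    unfolding sg(4) sh(4) by (rule relcomp_add_horizontal)
  then show "lift n g U O lift n h U = lift n (g O h) U"
    unfolding sgh(4) drop_gh .
  have "ninv (lift n g U) = ninv g0" "ninv (lift n h U) = ninv h0"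
    "ninv (lift n (g O h) U) = ninv (g0 O h0)"
    unfolding ninv_def sg(9) sh(9) sgh(9) drop_gh by simp_all
  moreover have "ninv g + ninv h = ninv (g O h) \<longleftrightarrow> ninv g0 + ninv h0 = ninv (g0 O h0)"
    unfolding gh
    by (subst sg(1), subst sh(1), rule ninv_relcomp_add_horizontal)
       (use sg(5) sh(5) sg(2,3) sh(3) rd0 in \<open>auto simp: is_gen_iff is_gen_finite\<close>)
  ultimately show "ninv (lift n g U) + ninv (lift n h U) = ninv (lift n (g O h) U)
         \<longleftrightarrow> ninv g + ninv h = ninv (g O h)"
    by simp
qed

lemma gmult_lift_iff:
  assumes ig: "is_gen (n-1) g" and ag: "admissible n g U"
    and ih: "is_gen (n-1) h" and ah: "admissible n h U'"
  shows "gmult (lift n g U) (lift n h U') = Some c \<longleftrightarrow>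
     U = U' \<and> (\<exists>k. gmult g h = Some k \<and> c = lift n k U)"
proof (cases "U = U' \<and> Range g = Domain h")
  case True
  then show ?thesis
    unfolding gmult_def using lift_Range_Domain_iff[OF ig ag ih ah] lift_relcomp[OF ig ag ih] ah
    by auto
next
  case False
  then show ?thesis unfolding gmult_def using lift_Range_Domain_iff[OF ig ag ih ah] by auto
qed

lemma lift_swap:
  assumes ig: "is_gen (n-1) g" and ag: "admissible n g U"
    and pq: "(p,q) \<in> invs g" "fst p \<notin> W_M n ` U" "fst q \<notin> W_M n ` U"
  shows "swap_strands (lift n g U) p q = lift n (swap_strands g p q) U"
    and "ninv (swap_strands (lift n g U) p q) + 1 = ninv (lift n g U)
         \<longleftrightarrow> ninv (swap_strands g p q) + 1 = ninv g"
proof -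
  define D where "D = W_M n ` U"
  define g0 where "g0 = drop_strands g D"
  note sg = lift_structure[OF ig ag, folded D_def g0_def]
  have pq0: "(p,q) \<in> invs g0" unfolding g0_def invs_drop_strands using pq D_def by auto
  have ig0: "is_gen (n-1) g0" by (rule sg(5))
  then have bg0: "partial_bij g0" "upward g0" "finite g0" using is_gen_iff is_gen_finite by auto
  have isw: "is_gen (n-1) (swap_strands g0 p q)" by (rule swap_is_gen[OF ig0 pq0])
  have "p \<in> g0" "q \<in> g0" using pq0 unfolding invs_def by auto
  then have pq_U: "p \<notin> idg U" "q \<notin> idg U" and pq_D: "p \<notin> idg D" "q \<notin> idg D"
    using sg(2,6,8) n2 unfolding idg_def by force+
  have sw_lift: "swap_strands (lift n g U) p q = swap_strands g0 p q \<union> idg U"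
    unfolding sg(4) swap_strands_def using pq_U by blast
  have sw_g: "swap_strands g p q = swap_strands g0 p q \<union> idg D"
    unfolding swap_strands_def using pq_D by (subst sg(1)) blast
  have sw_dom: "Domain (swap_strands g0 p q) \<inter> D = {}" "Range (swap_strands g0 p q) \<inter> D = {}"
    using swap_Domain_Range[OF pq0] sg(2,3) by blast+
  show "swap_strands (lift n g U) p q = lift n (swap_strands g p q) U"
    unfolding sw_lift unfolding lift_def D_def[symmetric] sw_g drop_strands_def idg_def
    using sw_dom(1) by blast
  have "b < u" if "(a,b) \<in> swap_strands g0 p q" "u \<in> U" for a b u
    using that isw sg(8) n2 unfolding is_gen_def by force
  then have "ninv (swap_strands g0 p q \<union> idg U) = ninv (swap_strands g0 p q)"
    unfolding ninv_def using invs_add_high_horizontal isw is_gen_iff by metis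
  moreover have "ninv (swap_strands g0 p q \<union> idg D)
      = ninv (swap_strands g0 p q) + total_crossings (swap_strands g0 p q) D"
    using sw_dom isw is_gen_iff is_gen_finite by (intro ninv_add_horizontal) auto
  moreover have "ninv g = ninv g0 + total_crossings g0 D"
    using sg(2,3) bg0 by (subst sg(1), intro ninv_add_horizontal) auto
  moreover have "total_crossings (swap_strands g0 p q) D = total_crossings g0 D"
    using swap_crossings[OF bg0(3,1,2) pq0] pq(3) D_def by simp
  moreover have "ninv (lift n g U) = ninv g0" unfolding ninv_def sg(9) ..
  ultimately show "ninv (swap_strands (lift n g U) p q) + 1 = ninv (lift n g U)
         \<longleftrightarrow> ninv (swap_strands g p q) + 1 = ninv g"
    unfolding sw_lift sw_g by simp
qed

lemma ediff_lift_iff: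
  assumes ig: "is_gen (n-1) g" and ag: "admissible n g U"
  shows "(p,q) \<in> invs (lift n g U) \<and> c = swap_strands (lift n g U) p q \<and> ninv c + 1 = ninv (lift n g U)
    \<longleftrightarrow> (p,q) \<in> invs g \<and> fst p \<notin> W_M n ` U \<and> fst q \<notin> W_M n ` U \<and>
         c = lift n (swap_strands g p q) U \<and> ninv (swap_strands g p q) + 1 = ninv g"
proof -
  have invs_iff: "(p,q) \<in> invs (lift n g U) \<longleftrightarrow>
      (p,q) \<in> invs g \<and> fst p \<notin> W_M n ` U \<and> fst q \<notin> W_M n ` U"
    unfolding lift_structure(9)[OF ig ag] invs_drop_strands by simp
  show ?thesis
  proof (cases "(p,q) \<in> invs g \<and> fst p \<notin> W_M n ` U \<and> fst q \<notin> W_M n ` U")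
    case True
    then have "(p,q) \<in> invs g" "fst p \<notin> W_M n ` U" "fst q \<notin> W_M n ` U" by auto
    from lift_swap[OF ig ag this] show ?thesis using invs_iff True by auto
  next
    case False
    then show ?thesis using invs_iff by auto
  qed
qed

lemma gmult_W_gen:
  assumes wx: "W_gen n x" and wy: "W_gen n y" and xy: "gmult x y = Some c"
  shows "W_gen n c" "gmult (proj n x) (proj n y) = Some (proj n c)"
    "x = lift n (proj n x) (upper_points n c)" "y = lift n (proj n y) (upper_points n c)"
proof -
  note dx = W_gen_decompose[OF wx] and dy = W_gen_decompose[OF wy]
  have "gmult (lift n (proj n x) (upper_points n x)) (lift n (proj n y) (upper_points n y)) = Some c"
    using xy dx(3) dy(3) by simp
  then obtain k where U: "upper_points n x = upper_points n y"
    and k: "gmult (proj n x) (proj n y) = Some k" and c: "c = lift n k (upper_points n x)"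
    unfolding gmult_lift_iff[OF dx(1,2) dy(1,2)] by blast
  have "k = proj n x O proj n y" using gmult_SomeD[OF k] by simp
  then have "is_gen (n-1) k" "admissible n k (upper_points n x)"
    using is_gen_relcomp[OF dx(1) dy(1)] admissible_relcomp[OF dx(2)] dy(2) U by simp_all
  note lk = lift_W_gen[OF this]
  show "W_gen n c" using lk(1) c by simp
  show "gmult (proj n x) (proj n y) = Some (proj n c)" using k lk(2) c by simp
  show "x = lift n (proj n x) (upper_points n c)" using dx(3) lk(3) c by simp
  show "y = lift n (proj n y) (upper_points n c)" using dy(3) lk(3) c U by simp
qed

lemma mult_terms_bij:
  assumes A: "\<forall>g\<in>a. is_gen (n-1) g" and B: "\<forall>g\<in>b. is_gen (n-1) g" and wc: "W_gen n c"
  defines "V \<equiv> upper_points n c"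
  shows "bij_betw (\<lambda>(g,h). (lift n g V, lift n h V))
     {(g,h). g \<in> a \<and> h \<in> b \<and> gmult g h = Some (proj n c)}
     {(x,y). x \<in> lift_elt n a \<and> y \<in> lift_elt n b \<and> gmult x y = Some c}"
proof -
  note dc = W_gen_decompose[OF wc, folded V_def]
  have adm: "admissible n g V \<and> admissible n h V \<and> is_gen (n-1) g \<and> is_gen (n-1) h"
    if "g \<in> a" "h \<in> b" "gmult g h = Some (proj n c)" for g h
  proof -
    have "is_gen (n-1) g" "is_gen (n-1) h" using that A B by auto
    moreover have "proj n c = g O h" using gmult_SomeD[OF that(3)] by simp
    ultimately show ?thesis
      using admissible_of_relcomp[of g h n V] dc(2) is_gen_iff by auto
  qed
  show ?thesis
  proof (rule bij_betw_byWitness[where f' = "\<lambda>(x,y). (proj n x, proj n y)"])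
    show "\<forall>s\<in>{(g,h). g \<in> a \<and> h \<in> b \<and> gmult g h = Some (proj n c)}.
        (\<lambda>(x,y). (proj n x, proj n y)) ((\<lambda>(g,h). (lift n g V, lift n h V)) s) = s"
      using adm lift_W_gen(2) by auto
    show "\<forall>s\<in>{(x,y). x \<in> lift_elt n a \<and> y \<in> lift_elt n b \<and> gmult x y = Some c}.
        (\<lambda>(g,h). (lift n g V, lift n h V)) ((\<lambda>(x,y). (proj n x, proj n y)) s) = s"
      using gmult_W_gen(3,4) unfolding lift_elt_def V_def by auto
    show "(\<lambda>(g,h). (lift n g V, lift n h V)) ` {(g,h). g \<in> a \<and> h \<in> b \<and> gmult g h = Some (proj n c)}
        \<subseteq> {(x,y). x \<in> lift_elt n a \<and> y \<in> lift_elt n b \<and> gmult x y = Some c}"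
    proof clarify
      fix g h assume gh: "g \<in> a" "h \<in> b" "gmult g h = Some (proj n c)"
      note ad = adm[OF gh]
      have "gmult (lift n g V) (lift n h V) = Some c"
        using gmult_lift_iff[of g V h V c] ad gh(3) dc(3) by auto
      then show "lift n g V \<in> lift_elt n a \<and> lift n h V \<in> lift_elt n b \<and> gmult (lift n g V) (lift n h V) = Some c"
        using gh ad lift_W_gen unfolding lift_elt_def by auto
    qed
    show "(\<lambda>(x,y). (proj n x, proj n y)) ` {(x,y). x \<in> lift_elt n a \<and> y \<in> lift_elt n b \<and> gmult x y = Some c}
        \<subseteq> {(g,h). g \<in> a \<and> h \<in> b \<and> gmult g h = Some (proj n c)}"
      using gmult_W_gen(2) unfolding lift_elt_def by auto
  qed
qed

lemma lift_elt_emult: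
  assumes A: "\<forall>g\<in>a. is_gen (n-1) g" and B: "\<forall>g\<in>b. is_gen (n-1) g"
  shows "lift_elt n (emult a b) = emult (lift_elt n a) (lift_elt n b)"
proof (rule set_eqI)
  fix c
  show "c \<in> lift_elt n (emult a b) \<longleftrightarrow> c \<in> emult (lift_elt n a) (lift_elt n b)"
  proof (cases "W_gen n c")
    case True
    have "c \<in> lift_elt n (emult a b) \<longleftrightarrow>
        odd (card {(g,h). g \<in> a \<and> h \<in> b \<and> gmult g h = Some (proj n c)})"
      using True unfolding lift_elt_def emult_def by simp
    then show ?thesis unfolding emult_def[of "lift_elt n a"]
      using bij_betw_same_card[OF mult_terms_bij[OF A B True]] by simp
  next
    case False
    then have no_terms: "{(x,y). x \<in> lift_elt n a \<and> y \<in> lift_elt n b \<and> gmult x y = Some c} = {}"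
      using gmult_W_gen(1) unfolding lift_elt_def by blast
    have "c \<notin> emult (lift_elt n a) (lift_elt n b)"
      unfolding emult_def mem_Collect_eq no_terms by simp
    then show ?thesis using False unfolding lift_elt_def[of n "emult a b"] by simp
  qed
qed

lemma ediff_W_gen:
  assumes wx: "W_gen n x" and pq: "(p,q) \<in> invs x" and c: "c = swap_strands x p q"
    and drop: "ninv c + 1 = ninv x"
  shows "W_gen n c" "(p,q) \<in> invs (proj n x)" "proj n c = swap_strands (proj n x) p q"
    "ninv (proj n c) + 1 = ninv (proj n x)" "x = lift n (proj n x) (upper_points n c)"
proof -
  define U where "U = upper_points n x"
  note dx = W_gen_decompose[OF wx, folded U_def]
  have "(p,q) \<in> invs (lift n (proj n x) U) \<and> c = swap_strands (lift n (proj n x) U) p q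
      \<and> ninv c + 1 = ninv (lift n (proj n x) U)"
    using pq c drop dx(3) by simp
  then have d: "(p,q) \<in> invs (proj n x)" "fst p \<notin> W_M n ` U" "fst q \<notin> W_M n ` U"
    "c = lift n (swap_strands (proj n x) p q) U" "ninv (swap_strands (proj n x) p q) + 1 = ninv (proj n x)"
    unfolding ediff_lift_iff[OF dx(1,2)] by auto
  have "is_gen (n-1) (swap_strands (proj n x) p q)" "admissible n (swap_strands (proj n x) p q) U"
    using swap_is_gen[OF dx(1) d(1)] admissible_swap[OF dx(2) d(2,3)] by auto
  note lc = lift_W_gen[OF this, folded d(4)]
  show "W_gen n c" "(p,q) \<in> invs (proj n x)" "proj n c = swap_strands (proj n x) p q"
    "ninv (proj n c) + 1 = ninv (proj n x)" using lc d by auto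
  show "x = lift n (proj n x) (upper_points n c)" using dx(3) lc(3) by simp
qed

lemma diff_terms_bij:
  assumes X: "\<forall>g\<in>X. is_gen (n-1) g" and wc: "W_gen n c"
  defines "V \<equiv> upper_points n c"
  shows "bij_betw (\<lambda>(g,pq). (lift n g V, pq))
     {(g,p,q). g \<in> X \<and> (p,q) \<in> invs g \<and> proj n c = swap_strands g p q \<and> ninv (proj n c) + 1 = ninv g}
     {(x,p,q). x \<in> lift_elt n X \<and> (p,q) \<in> invs x \<and> c = swap_strands x p q \<and> ninv c + 1 = ninv x}"
proof -
  note dc = W_gen_decompose[OF wc, folded V_def]
  have down: "is_gen (n-1) g \<and> admissible n g V \<and> fst p \<notin> W_M n ` V \<and> fst q \<notin> W_M n ` V"
    if "g \<in> X" "(p,q) \<in> invs g" "proj n c = swap_strands g p q" for g p q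
    using that X dc(2) admissible_unswap[of "n-1" g p q n V] by auto
  show ?thesis
  proof (rule bij_betw_byWitness[where f' = "\<lambda>(x,pq). (proj n x, pq)"])
    show "\<forall>s\<in>{(g,p,q). g \<in> X \<and> (p,q) \<in> invs g \<and> proj n c = swap_strands g p q \<and> ninv (proj n c) + 1 = ninv g}.
        (\<lambda>(x,pq). (proj n x, pq)) ((\<lambda>(g,pq). (lift n g V, pq)) s) = s"
      using down lift_W_gen(2) by auto
    show "\<forall>s\<in>{(x,p,q). x \<in> lift_elt n X \<and> (p,q) \<in> invs x \<and> c = swap_strands x p q \<and> ninv c + 1 = ninv x}.
        (\<lambda>(g,pq). (lift n g V, pq)) ((\<lambda>(x,pq). (proj n x, pq)) s) = s"
      using ediff_W_gen(5) unfolding lift_elt_def V_def by auto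
    show "(\<lambda>(g,pq). (lift n g V, pq)) `
        {(g,p,q). g \<in> X \<and> (p,q) \<in> invs g \<and> proj n c = swap_strands g p q \<and> ninv (proj n c) + 1 = ninv g}
        \<subseteq> {(x,p,q). x \<in> lift_elt n X \<and> (p,q) \<in> invs x \<and> c = swap_strands x p q \<and> ninv c + 1 = ninv x}"
    proof clarify
      fix g p q assume g: "g \<in> X" "(p,q) \<in> invs g" "proj n c = swap_strands g p q"
        "ninv (proj n c) + 1 = ninv g"
      note dg = down[OF g(1-3)]
      have "(p,q) \<in> invs (lift n g V) \<and> c = swap_strands (lift n g V) p q \<and> ninv c + 1 = ninv (lift n g V)"
        unfolding ediff_lift_iff[OF conjunct1[OF dg] conjunct1[OF conjunct2[OF dg]]]
        using dg g dc(3) by simp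
      then show "lift n g V \<in> lift_elt n X \<and> (p,q) \<in> invs (lift n g V) \<and>
          c = swap_strands (lift n g V) p q \<and> ninv c + 1 = ninv (lift n g V)"
        using g(1) dg lift_W_gen unfolding lift_elt_def by auto
    qed
    show "(\<lambda>(x,pq). (proj n x, pq)) `
        {(x,p,q). x \<in> lift_elt n X \<and> (p,q) \<in> invs x \<and> c = swap_strands x p q \<and> ninv c + 1 = ninv x}
        \<subseteq> {(g,p,q). g \<in> X \<and> (p,q) \<in> invs g \<and> proj n c = swap_strands g p q \<and> ninv (proj n c) + 1 = ninv g}"
      using ediff_W_gen(2-4) unfolding lift_elt_def by auto
  qed
qed

lemma lift_elt_ediff:
  assumes X: "\<forall>g\<in>X. is_gen (n-1) g"
  shows "lift_elt n (ediff X) = ediff (lift_elt n X)"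
proof (rule set_eqI)
  fix c
  show "c \<in> lift_elt n (ediff X) \<longleftrightarrow> c \<in> ediff (lift_elt n X)"
  proof (cases "W_gen n c")
    case True
    have "c \<in> lift_elt n (ediff X) \<longleftrightarrow> odd (card
        {(g,p,q). g \<in> X \<and> (p,q) \<in> invs g \<and> proj n c = swap_strands g p q \<and> ninv (proj n c) + 1 = ninv g})"
      using True unfolding lift_elt_def ediff_def by simp
    then show ?thesis unfolding ediff_def[of "lift_elt n X"]
      using bij_betw_same_card[OF diff_terms_bij[OF X True]] by simp
  next
    case False
    then have no_terms:
      "{(x,p,q). x \<in> lift_elt n X \<and> (p,q) \<in> invs x \<and> c = swap_strands x p q \<and> ninv c + 1 = ninv x} = {}"
      using ediff_W_gen(1) unfolding lift_elt_def by blast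
    have "c \<notin> ediff (lift_elt n X)"
      unfolding ediff_def mem_Collect_eq no_terms by simp
    then show ?thesis using False unfolding lift_elt_def[of n "ediff X"] by simp
  qed
qed

lemma gen_is_W_gen:
  assumes "is_gen (n-1) g"
  shows "W_gen n g" "proj n g = g"
proof -
  have a: "admissible n g {}" and l: "lift n g {} = g"
    unfolding admissible_def lift_def drop_strands_def idg_def by auto
  show "W_gen n g" "proj n g = g" using lift_W_gen(1,2)[OF assms a] unfolding l .
qed

lemma lift_elt_recover:
  assumes "\<forall>g\<in>Y. is_gen (n-1) g"
  shows "Y = {g \<in> lift_elt n Y. is_gen (n-1) g}"
proof (intro equalityI subsetI)
  fix g assume "g \<in> Y"
  then show "g \<in> {g \<in> lift_elt n Y. is_gen (n-1) g}"
    using assms gen_is_W_gen[of g] unfolding lift_elt_def by simp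
next
  fix g assume "g \<in> {g \<in> lift_elt n Y. is_gen (n-1) g}"
  then show "g \<in> Y" using gen_is_W_gen(2)[of g] unfolding lift_elt_def by simp
qed

lemma lift_elt_inj: "inj_on (lift_elt n) (strands_alg (n-1) k)"
proof (rule inj_onI)
  fix Y Y' assume Y: "Y \<in> strands_alg (n-1) k" and Y': "Y' \<in> strands_alg (n-1) k"
    and eq: "lift_elt n Y = lift_elt n Y'"
  have "Y = {g \<in> lift_elt n Y. is_gen (n-1) g}" by (rule lift_elt_recover[OF strands_alg_gens[OF Y]])
  also have "\<dots> = {g \<in> lift_elt n Y'. is_gen (n-1) g}" unfolding eq ..
  also have "\<dots> = Y'" by (rule lift_elt_recover[OF strands_alg_gens[OF Y'], symmetric])
  finally show "Y = Y'" .
qed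

lemma W_gen_idg:
  assumes "S \<subseteq> {1..2*n-2}" "inj_on (W_M n) S"
  shows "W_gen n (idg S)" "proj n (idg S) = idg (W_M n ` S)"
proof -
  have "is_gen (2*n-2) (idg S)" using assms(1) unfolding is_gen_def idg_def by auto
  then show "W_gen n (idg S)"
    unfolding W_gen_def ext_gen_def Domain_Range_idg using assms(2) unfolding idg_def by auto
  show "proj n (idg S) = idg (W_M n ` S)" unfolding proj_def idg_def by force
qed

lemma I_s_eq: "I_s (2*n-2) (W_M n) s = lift_elt n {idg s}"
proof (intro equalityI subsetI)
  fix y assume "y \<in> I_s (2*n-2) (W_M n) s"
  then obtain S where "y = idg S" "S \<subseteq> {1..2*n-2}" "inj_on (W_M n) S" "W_M n ` S = s"
    unfolding I_s_def by auto
  then show "y \<in> lift_elt n {idg s}" unfolding lift_elt_def using W_gen_idg by simp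
next
  fix x assume "x \<in> lift_elt n {idg s}"
  then have w: "W_gen n x" and p: "proj n x = idg s" unfolding lift_elt_def by auto
  have e: "ext_gen (2*n-2) (W_seg n) x" and iD: "inj_on (W_M n) (Domain x)"
    using w unfolding W_gen_def by auto
  have "a = b" if ab: "(a,b) \<in> x" for a b
  proof -
    have "(W_M n a, W_M n b) \<in> idg s" using p ab unfolding proj_def by force
    then have "W_M n a = W_M n b" unfolding idg_def by auto
    then show "a = b" using W_strand(4)[OF n2 e ab] W_M_low by auto
  qed
  then have "x = idg (Domain x)" unfolding idg_def by force
  moreover have "Domain x \<subseteq> {1..2*n-2}" using W_strand(1,2,3)[OF n2 e] by force
  moreover have "W_M n ` Domain x = s" using arg_cong[OF p, of Domain]
    unfolding Domain_proj Domain_Range_idg(1) .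
  ultimately show "x \<in> I_s (2*n-2) (W_M n) s" unfolding I_s_def using iD by blast
qed

lemma I_tot_iff:
  "e \<in> I_tot (2*n-2) (n-1) (W_M n) k \<longleftrightarrow>
    (\<exists>S. e = idg S \<and> S \<subseteq> {1..2*n-2} \<and> inj_on (W_M n) S \<and> card S = k)"
proof
  assume "e \<in> I_tot (2*n-2) (n-1) (W_M n) k"
  then obtain s S where S: "card s = k" "e = idg S" "S \<subseteq> {1..2*n-2}" "inj_on (W_M n) S"
      "W_M n ` S = s" unfolding I_tot_def I_s_def by auto
  then have "card S = k" using card_image[OF S(4)] by simp
  with S show "\<exists>S. e = idg S \<and> S \<subseteq> {1..2*n-2} \<and> inj_on (W_M n) S \<and> card S = k"
    by blast
next
  assume "\<exists>S. e = idg S \<and> S \<subseteq> {1..2*n-2} \<and> inj_on (W_M n) S \<and> card S = k"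
  then obtain S where S: "e = idg S" "S \<subseteq> {1..2*n-2}" "inj_on (W_M n) S" "card S = k" by blast
  have "W_M n ` S \<subseteq> {1..n-1}" using S(2) W_M_range by force
  moreover have "card (W_M n ` S) = k" using S(4) card_image[OF S(3)] by simp
  ultimately show "e \<in> I_tot (2*n-2) (n-1) (W_M n) k" unfolding I_tot_def I_s_def using S by blast
qed

(* Strictly increasing strands of W_n lie in Z_1, since the other segments are single points.  *)
lemma increasing_W_strands:
  assumes ep: "ext_gen (2*n-2) (W_seg n) psi" and st: "\<forall>(a,b)\<in>psi. a < b"
  shows "(a,b) \<in> psi \<Longrightarrow> 1 \<le> a \<and> a < b \<and> b \<le> n-1" and "is_gen (n-1) psi"
proof -
  show low: "1 \<le> a \<and> a < b \<and> b \<le> n-1" if "(a,b) \<in> psi" for a b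
    using bspec[OF st that] W_strand(1,4)[OF n2 ep that] by auto
  have "is_gen (2*n-2) psi" using ep unfolding ext_gen_def by simp
  moreover have "psi \<subseteq> {1..n-1} \<times> {1..n-1}" using low by fastforce
  ultimately show "is_gen (n-1) psi" unfolding is_gen_iff by blast
qed

lemma a_elt_W_gen:
  assumes ep: "ext_gen (2*n-2) (W_seg n) psi" and st: "\<forall>(a,b)\<in>psi. a < b"
    and y: "y \<in> a_elt (2*n-2) k psi"
    and iD: "inj_on (W_M n) (Domain y)" and iR: "inj_on (W_M n) (Range y)"
  shows "W_gen n y" "proj n y \<in> a_elt (n-1) k psi"
proof -
  obtain U where U: "y = psi \<union> idg U" "U \<subseteq> {1..2*n-2}" "U \<inter> (Domain psi \<union> Range psi) = {}"
    "card (Domain psi \<union> U) = k" using y unfolding a_elt_def by auto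
  note low = increasing_W_strands(1)[OF ep st]
  have "is_gen (2*n-2) psi" using ep unfolding ext_gen_def by simp
  then have "is_gen (2*n-2) y" by (rule a_elt_gen(1)[OF _ y])
  moreover have "\<forall>(a,b)\<in>psi. W_seg n a = W_seg n b" using ep unfolding ext_gen_def by simp
  then have "\<forall>(a,b)\<in>y. W_seg n a = W_seg n b" unfolding U(1) idg_def by auto
  ultimately show "W_gen n y" unfolding W_gen_def ext_gen_def using iD iR by simp
  have fix_psi: "W_M n a = a" if "a \<in> Domain psi \<union> Range psi" for a
  proof -
    from that obtain b where "(a,b) \<in> psi \<or> (b,a) \<in> psi" by blast
    then have "a \<le> n-1" using low by fastforce
    then show ?thesis by (rule W_M_low)
  qed
  have iD': "inj_on (W_M n) (Domain psi \<union> U)" and iR': "inj_on (W_M n) (Range psi \<union> U)"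
    using iD iR unfolding U(1) Domain_Range_idg .
  have "(\<lambda>(a,b). (W_M n a, W_M n b)) ` psi = psi"
    by (rule W_M_image_low) (auto dest: low)
  moreover have "(\<lambda>(a,b). (W_M n a, W_M n b)) ` idg U = idg (W_M n ` U)"
    unfolding idg_def by force
  ultimately have "proj n y = psi \<union> idg (W_M n ` U)"
    unfolding proj_def U(1) image_Un by simp
  moreover have "W_M n ` U \<subseteq> {1..n-1}" using U(2) W_M_range by force
  moreover have "W_M n ` U \<inter> Domain psi = {}"
    using U(3) fix_psi by (intro inj_image_avoids_fixed[OF iD']) auto
  moreover have "W_M n ` U \<inter> Range psi = {}"
    using U(3) fix_psi by (intro inj_image_avoids_fixed[OF iR']) auto
  moreover have "card (Domain psi \<union> W_M n ` U) = k"
  proof -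
    have "W_M n ` Domain psi = Domain psi" using fix_psi by force
    then have "W_M n ` (Domain psi \<union> U) = Domain psi \<union> W_M n ` U" by (simp add: image_Un)
    then show ?thesis using card_image[OF iD'] U(4) by simp
  qed
  ultimately show "proj n y \<in> a_elt (n-1) k psi"
    unfolding a_elt_def by (intro CollectI exI[of _ "W_M n ` U"]) auto
qed

(* Conversely, a W_n-generator projecting to a term of a_k(psi) is a term of a_k(psi)
   upstairs: its horizontal strands at upper points replace horizontal strands of the
   projection.  *)
lemma W_gen_a_elt:
  assumes ep: "ext_gen (2*n-2) (W_seg n) psi" and st: "\<forall>(a,b)\<in>psi. a < b"
    and w: "W_gen n y" and py: "proj n y \<in> a_elt (n-1) k psi"
  shows "y \<in> a_elt (2*n-2) k psi"
proof -
  define V where "V = upper_points n y"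
  note dy = W_gen_decompose[OF w, folded V_def]
  note low = increasing_W_strands(1)[OF ep st]
  obtain U where U: "proj n y = psi \<union> idg U" "U \<subseteq> {1..n-1}"
    "U \<inter> (Domain psi \<union> Range psi) = {}" "card (Domain psi \<union> U) = k"
    using py unfolding a_elt_def by auto
  have V: "V \<subseteq> {n..2*n-2}" "W_M n ` V \<subseteq> U"
  proof -
    show "V \<subseteq> {n..2*n-2}" using dy(2) unfolding admissible_def by simp
    have "(W_M n v, W_M n v) \<in> psi \<union> idg U" if "v \<in> V" for v
      using dy(2) that unfolding admissible_def U(1) by blast
    then show "W_M n ` V \<subseteq> U" using st unfolding idg_def by fastforce
  qed
  have "drop_strands (psi \<union> idg U) (W_M n ` V) = psi \<union> idg (U - W_M n ` V)"
    unfolding drop_strands_def idg_def using U(3) V(2) by blast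
  then have y: "y = psi \<union> idg ((U - W_M n ` V) \<union> V)"
    using dy(3) unfolding lift_def U(1) idg_def by blast
  have "{1..n-1} \<subseteq> {1..2*n-2}" "{n..2*n-2} \<subseteq> {1..2*n-2}" using n2 by auto
  then have "(U - W_M n ` V) \<union> V \<subseteq> {1..2*n-2}" using U(2) V(1) by blast
  moreover have "((U - W_M n ` V) \<union> V) \<inter> (Domain psi \<union> Range psi) = {}"
  proof -
    have "Domain psi \<union> Range psi \<subseteq> {..n-1}" using low by fastforce
    then show ?thesis using U(3) V(1) n2 by fastforce
  qed
  moreover have "card (Domain psi \<union> ((U - W_M n ` V) \<union> V)) = k"
  proof -
    have "inj_on (W_M n) (Domain y)" using w unfolding W_gen_def by simp
    then have "card (Domain y) = card (Domain (proj n y))" by (simp add: Domain_proj card_image)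
    then show ?thesis using U(1,4) y Domain_Range_idg(3) by metis
  qed
  ultimately show ?thesis unfolding a_elt_def using y by blast
qed

lemma I_a_I_eq:
  assumes ep: "ext_gen (2*n-2) (W_seg n) psi" and st: "\<forall>(a,b)\<in>psi. a < b"
  shows "emult (emult (I_tot (2*n-2) (n-1) (W_M n) k) (a_elt (2*n-2) k psi)) (I_tot (2*n-2) (n-1) (W_M n) k)
    = lift_elt n (a_elt (n-1) k psi)"
proof -
  define It where "It = I_tot (2*n-2) (n-1) (W_M n) k"
  have It_idg: "idg S \<in> It \<longleftrightarrow> S \<subseteq> {1..2*n-2} \<and> inj_on (W_M n) S \<and> card S = k" for S
    unfolding It_def I_tot_iff using idg_inj by blast
  have "\<exists>S. e = idg S" if "e \<in> It" for e using that unfolding It_def I_tot_iff by blast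
  then have "emult (emult It (a_elt (2*n-2) k psi)) It
      = {y \<in> a_elt (2*n-2) k psi. idg (Domain y) \<in> It \<and> idg (Range y) \<in> It}"
    by (rule emult_idempotents_sandwich)
  also have "\<dots> = lift_elt n (a_elt (n-1) k psi)"
  proof (intro equalityI subsetI)
    fix y assume "y \<in> {y \<in> a_elt (2*n-2) k psi. idg (Domain y) \<in> It \<and> idg (Range y) \<in> It}"
    then have "y \<in> a_elt (2*n-2) k psi" "inj_on (W_M n) (Domain y)" "inj_on (W_M n) (Range y)"
      unfolding It_idg by auto
    then show "y \<in> lift_elt n (a_elt (n-1) k psi)"
      using a_elt_W_gen[OF ep st] unfolding lift_elt_def by blast
  next
    fix y assume "y \<in> lift_elt n (a_elt (n-1) k psi)"
    then have w: "W_gen n y" and "proj n y \<in> a_elt (n-1) k psi" unfolding lift_elt_def by auto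
    then have y: "y \<in> a_elt (2*n-2) k psi" by (rule W_gen_a_elt[OF ep st])
    have "is_gen (2*n-2) y" using w unfolding W_gen_def ext_gen_def by simp
    then have "Domain y \<subseteq> {1..2*n-2}" "Range y \<subseteq> {1..2*n-2}"
      and "card (Range y) = card (Domain y)"
      using card_Domain_Range is_gen_finite is_gen_iff unfolding is_gen_def by auto
    then show "y \<in> {y \<in> a_elt (2*n-2) k psi. idg (Domain y) \<in> It \<and> idg (Range y) \<in> It}"
      using y a_elt_card_Domain[OF y] w unfolding It_idg W_gen_def by simp
  qed
  finally show ?thesis unfolding It_def .
qed

(* Every generator of A(n-1,k) lifts into A(W_n,k): lift {g} = I(Dom g) \<cdot> I a_k(psi) I, where
   psi consists of the moving strands of g.  *)
lemma lift_gen_in_arc_alg: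
  assumes ig: "is_gen (n-1) g" and cg: "card g = k"
  shows "lift_elt n {g} \<in> arc_alg (2*n-2) (n-1) (W_seg n) (W_M n) k"
proof -
  define psi where "psi = {(a,b)\<in>g. a < b}"
  define F where "F = {a. (a,a) \<in> g}"
  note split = gen_split_moving[OF ig, folded psi_def F_def]
  have ip: "is_gen (n-1) psi" by (rule is_gen_subset[OF ig]) (auto simp: psi_def)
  have "is_gen (2*n-2) psi" by (rule is_gen_mono[OF ip]) simp
  moreover have "\<forall>(a,b)\<in>psi. W_seg n a = W_seg n b" using ip unfolding is_gen_def W_seg_def by auto
  ultimately have ep: "ext_gen (2*n-2) (W_seg n) psi" unfolding ext_gen_def by simp
  have st: "\<forall>(a,b)\<in>psi. a < b" unfolding psi_def by auto
  have dg: "card (Domain g) = k"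
    using card_Domain_Range(1)[OF is_gen_finite[OF ig]] ig cg is_gen_iff by auto
  then have "g \<in> a_elt (n-1) k psi"
    unfolding a_elt_def using split Domain_Range_idg(3)[of psi F] by force
  then have "lift_elt n {g} = lift_elt n (emult {idg (Domain g)} (a_elt (n-1) k psi))"
    by (simp add: idempotent_times_a_elt)
  also have "\<dots> = emult (lift_elt n {idg (Domain g)}) (lift_elt n (a_elt (n-1) k psi))"
  proof (rule lift_elt_emult)
    show "\<forall>e\<in>{idg (Domain g)}. is_gen (n-1) e"
      using ig unfolding is_gen_def idg_def by auto
    show "\<forall>e\<in>a_elt (n-1) k psi. is_gen (n-1) e" using a_elt_gen(1)[OF ip] by blast
  qed
  also have "\<dots> = emult (I_s (2*n-2) (W_M n) (Domain g))
      (emult (emult (I_tot (2*n-2) (n-1) (W_M n) k) (a_elt (2*n-2) k psi)) (I_tot (2*n-2) (n-1) (W_M n) k))"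
    unfolding I_s_eq I_a_I_eq[OF ep st] ..
  also have "\<dots> \<in> arc_alg (2*n-2) (n-1) (W_seg n) (W_M n) k"
  proof (rule arc_alg_emult)
    show "I_s (2*n-2) (W_M n) (Domain g) \<in> arc_alg (2*n-2) (n-1) (W_seg n) (W_M n) k"
      using ig dg unfolding is_gen_def by (intro arc_alg_I_s) auto
    show "emult (emult (I_tot (2*n-2) (n-1) (W_M n) k) (a_elt (2*n-2) k psi)) (I_tot (2*n-2) (n-1) (W_M n) k)
        \<in> arc_alg (2*n-2) (n-1) (W_seg n) (W_M n) k" by (rule arc_alg_I_a_I[OF ep st])
  qed
  finally show ?thesis .
qed

lemma arc_alg_subset_lifts:
  assumes "x \<in> arc_alg (2*n-2) (n-1) (W_seg n) (W_M n) k"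
  shows "x \<in> lift_elt n ` strands_alg (n-1) k"
  using assms unfolding arc_alg_def
proof (induction rule: gen_subalg.induct)
  case (base x)
  then consider s where "x = I_s (2*n-2) (W_M n) s" "s \<subseteq> {1..n-1}" "card s = k"
    | psi where "x = emult (emult (I_tot (2*n-2) (n-1) (W_M n) k) (a_elt (2*n-2) k psi))
        (I_tot (2*n-2) (n-1) (W_M n) k)" "ext_gen (2*n-2) (W_seg n) psi" "\<forall>(a,b)\<in>psi. a < b"
    by blast
  then show ?case
  proof cases
    case (1 s)
    then have "x = lift_elt n {idg s}" "{idg s} \<in> strands_alg (n-1) k"
      using I_s_eq idg_in_strands_alg by simp_all
    then show ?thesis by (rule image_eqI)
  next
    case (2 psi)
    then have "x = lift_elt n (a_elt (n-1) k psi)" "a_elt (n-1) k psi \<in> strands_alg (n-1) k"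
      using I_a_I_eq a_elt_in_strands_alg increasing_W_strands(2) by simp_all
    then show ?thesis by (rule image_eqI)
  qed
next
  case zero
  have "{} \<in> strands_alg (n-1) k" unfolding strands_alg_def by simp
  then show ?case by (rule image_eqI[where f = "lift_elt n", OF lift_elt_empty[symmetric]])
next
  case (add x y)
  then obtain a b where ab: "x = lift_elt n a" "y = lift_elt n b"
    "a \<in> strands_alg (n-1) k" "b \<in> strands_alg (n-1) k" by blast
  then have "eadd x y = lift_elt n (eadd a b)" using lift_elt_eadd by simp
  then show ?case by (rule image_eqI[OF _ strands_alg_eadd[OF ab(3,4)]])
next
  case (mult x y)
  then obtain a b where ab: "x = lift_elt n a" "y = lift_elt n b"
    "a \<in> strands_alg (n-1) k" "b \<in> strands_alg (n-1) k" by blast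
  then have "emult x y = lift_elt n (emult a b)"
    using lift_elt_emult[OF strands_alg_gens strands_alg_gens] by simp
  then show ?case by (rule image_eqI[OF _ strands_alg_emult[OF ab(3,4)]])
qed

lemma lift_in_arc_alg:
  assumes "Y \<in> strands_alg (n-1) k"
  shows "lift_elt n Y \<in> arc_alg (2*n-2) (n-1) (W_seg n) (W_M n) k"
proof -
  have "finite Y" "\<forall>g\<in>Y. is_gen (n-1) g \<and> card g = k" using assms unfolding strands_alg_def by auto
  then show ?thesis
  proof (induction Y rule: finite_induct)
    case empty
    show ?case unfolding lift_elt_empty by (rule arc_alg_zero)
  next
    case (insert g Y)
    then show ?case
      unfolding lift_elt_insert[OF insert.hyps(2)]
      by (intro arc_alg_eadd lift_gen_in_arc_alg) simp_all
  qed
qed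

lemma arc_alg_eq: "arc_alg (2*n-2) (n-1) (W_seg n) (W_M n) k = lift_elt n ` strands_alg (n-1) k"
  using arc_alg_subset_lifts lift_in_arc_alg by blast

end

section \<open>The isomorphism\<close>

(* Lifting identifies A(n-1,k) with its image A(W_n,k). *)
theorem mainTheorem3:
  fixes n k :: nat
  assumes "2 \<le> n" and "k \<le> n - 1"
  shows "dga_iso (arc_alg (2 * n - 2) (n - 1) (W_seg n) (W_M n) k) (strands_alg (n - 1) k)"
proof -
  have "arc_alg (2 * n - 2) (n - 1) (W_seg n) (W_M n) k = lift_elt n ` strands_alg (n - 1) k"
    by (rule arc_alg_eq[OF assms(1)])
  moreover have "dga_iso (lift_elt n ` strands_alg (n - 1) k) (strands_alg (n - 1) k)"
  proof (rule dga_iso_image[OF lift_elt_inj[OF assms(1)]])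
    fix a b assume "a \<in> strands_alg (n - 1) k" "b \<in> strands_alg (n - 1) k"
    then show "eadd a b \<in> strands_alg (n - 1) k \<and> emult a b \<in> strands_alg (n - 1) k
        \<and> ediff a \<in> strands_alg (n - 1) k"
      and "lift_elt n (eadd a b) = eadd (lift_elt n a) (lift_elt n b)
        \<and> lift_elt n (emult a b) = emult (lift_elt n a) (lift_elt n b)
        \<and> lift_elt n (ediff a) = ediff (lift_elt n a)"
      using strands_alg_eadd strands_alg_emult strands_alg_ediff lift_elt_eadd
        lift_elt_emult[OF assms(1)] lift_elt_ediff[OF assms(1)] strands_alg_gens by auto
  qed
  ultimately show ?thesis by simp
qed

end
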